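(* Let $T$ be a complete classical theory in a countable language. Then $\mathbf{G}_0(T)$ is a Polish open topological groupoid with base $\mathbf{B}_0(T)$, and if $g=\mathrm{tp}(a,b)\in\mathbf{G}_0(T)$ then $t_g=\mathrm{tp}(a)$ and $s_g=\mathrm{tp}(b)$.
   Context: $\mathbf{G}_0(T)\subseteq S_{2\times\mathbb{N}}(T)$ (the space of types of pairs of $\mathbb{N}$-indexed sequences, logic topology, subspace topology on $\mathbf{G}_0$) is the set of types $\mathrm{tp}(a,b)$ where $a$ and $b$ are both enumerations of the same countable model $M\models T$ (sequences whose set of entries is exactly $M$). $\mathbf{B}_0(T)$ is the subset defined by $x=y$, i.e. the types $\mathrm{tp}(a,a)$, identified with $\mathrm{tp}(a)$. Composition: $\mathrm{tp}(a,b)\cdot\mathrm{tp}(b,c)=\mathrm{tp}(a,c)$ (defined when the middle types agree), inverse $\mathrm{tp}(a,b)^{-1}=\mathrm{tp}(b,a)$; $s_g=g^{-1}g$, $t_g=gg^{-1}$. A topological groupoid is open if its source map is open onto the base. *)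

theory Defs
  imports "HOL-Analysis.Analysis"
begin

datatype ('f,'v) trm = Var 'v | Fn 'f "('f,'v) trm list"

datatype ('f,'r,'v) fm =
    FBot
  | FEq "('f,'v) trm" "('f,'v) trm"
  | FRel 'r "('f,'v) trm list"
  | FNeg "('f,'r,'v) fm"
  | FConj "('f,'r,'v) fm" "('f,'r,'v) fm"
  | FEx 'v "('f,'r,'v) fm"

fun wf_trm :: "('f \<Rightarrow> nat) \<Rightarrow> ('f,'v) trm \<Rightarrow> bool" where
  "wf_trm arF (Var v) = True"
| "wf_trm arF (Fn f ts) = (length ts = arF f \<and> (\<forall>t\<in>set ts. wf_trm arF t))"

fun wf_fm :: "('f \<Rightarrow> nat) \<Rightarrow> ('r \<Rightarrow> nat) \<Rightarrow> ('f,'r,'v) fm \<Rightarrow> bool" where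
  "wf_fm arF arR FBot = True"
| "wf_fm arF arR (FEq s t) = (wf_trm arF s \<and> wf_trm arF t)"
| "wf_fm arF arR (FRel r ts) = (length ts = arR r \<and> (\<forall>t\<in>set ts. wf_trm arF t))"
| "wf_fm arF arR (FNeg \<phi>) = wf_fm arF arR \<phi>"
| "wf_fm arF arR (FConj \<phi> \<psi>) = (wf_fm arF arR \<phi> \<and> wf_fm arF arR \<psi>)"
| "wf_fm arF arR (FEx v \<phi>) = wf_fm arF arR \<phi>"

fun fv_trm :: "('f,'v) trm \<Rightarrow> 'v set" where
  "fv_trm (Var v) = {v}"
| "fv_trm (Fn f ts) = (\<Union>t\<in>set ts. fv_trm t)"

fun fv_fm :: "('f,'r,'v) fm \<Rightarrow> 'v set" where
  "fv_fm FBot = {}"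
| "fv_fm (FEq s t) = fv_trm s \<union> fv_trm t"
| "fv_fm (FRel r ts) = (\<Union>t\<in>set ts. fv_trm t)"
| "fv_fm (FNeg \<phi>) = fv_fm \<phi>"
| "fv_fm (FConj \<phi> \<psi>) = fv_fm \<phi> \<union> fv_fm \<psi>"
| "fv_fm (FEx v \<phi>) = fv_fm \<phi> - {v}"

definition sentence :: "('f \<Rightarrow> nat) \<Rightarrow> ('r \<Rightarrow> nat) \<Rightarrow> ('f,'r,'v) fm \<Rightarrow> bool" where
  "sentence arF arR \<phi> \<longleftrightarrow> wf_fm arF arR \<phi> \<and> fv_fm \<phi> = {}"

record ('a,'f,'r) struc =
  carr :: "'a set"
  fint :: "'f \<Rightarrow> 'a list \<Rightarrow> 'a"
  rint :: "'r \<Rightarrow> 'a list \<Rightarrow> bool"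

definition is_struc :: "('f \<Rightarrow> nat) \<Rightarrow> ('a,'f,'r) struc \<Rightarrow> bool" where
  "is_struc arF M \<longleftrightarrow> carr M \<noteq> {} \<and>
     (\<forall>f xs. length xs = arF f \<and> set xs \<subseteq> carr M \<longrightarrow> fint M f xs \<in> carr M)"

fun evl :: "('a,'f,'r) struc \<Rightarrow> ('v \<Rightarrow> 'a) \<Rightarrow> ('f,'v) trm \<Rightarrow> 'a" where
  "evl M e (Var v) = e v"
| "evl M e (Fn f ts) = fint M f (map (evl M e) ts)"

fun sat :: "('a,'f,'r) struc \<Rightarrow> ('v \<Rightarrow> 'a) \<Rightarrow> ('f,'r,'v) fm \<Rightarrow> bool" where
  "sat M e FBot = False"
| "sat M e (FEq s t) = (evl M e s = evl M e t)"
| "sat M e (FRel r ts) = rint M r (map (evl M e) ts)"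
| "sat M e (FNeg \<phi>) = (\<not> sat M e \<phi>)"
| "sat M e (FConj \<phi> \<psi>) = (sat M e \<phi> \<and> sat M e \<psi>)"
| "sat M e (FEx v \<phi>) = (\<exists>x\<in>carr M. sat M (e(v := x)) \<phi>)"

text \<open>Models considered have carriers inside nat: by downward Loewenheim--Skolem (countable
  language) this loses nothing for consistency/completeness, and every countable model
  is isomorphic to one with carrier contained in nat.\<close>

definition is_model :: "('f \<Rightarrow> nat) \<Rightarrow> ('a,'f,'r) struc \<Rightarrow> ('f,'r,nat) fm set \<Rightarrow> bool" where
  "is_model arF M T \<longleftrightarrow> is_struc arF M \<and>
     (\<forall>\<sigma>\<in>T. \<forall>e. range e \<subseteq> carr M \<longrightarrow> sat M e \<sigma>)"

definition complete_theory :: "('f \<Rightarrow> nat) \<Rightarrow> ('r \<Rightarrow> nat) \<Rightarrow> ('f,'r,nat) fm set \<Rightarrow> bool" where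
  "complete_theory arF arR T \<longleftrightarrow>
     (\<forall>\<sigma>\<in>T. sentence arF arR \<sigma>) \<and>
     (\<exists>M :: (nat,'f,'r) struc. is_model arF M T) \<and>
     (\<forall>\<sigma> :: ('f,'r,nat) fm. sentence arF arR \<sigma> \<longrightarrow>
        (\<forall>M :: (nat,'f,'r) struc. is_model arF M T \<longrightarrow>
            (\<forall>e. range e \<subseteq> carr M \<longrightarrow> sat M e \<sigma>)) \<or>
        (\<forall>M :: (nat,'f,'r) struc. is_model arF M T \<longrightarrow>
            (\<forall>e. range e \<subseteq> carr M \<longrightarrow> sat M e (FNeg \<sigma>))))"

definition tp :: "('f \<Rightarrow> nat) \<Rightarrow> ('r \<Rightarrow> nat) \<Rightarrow> ('a,'f,'r) struc \<Rightarrow> ('v \<Rightarrow> 'a) \<Rightarrow> ('f,'r,'v) fm set" where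
  "tp arF arR M e = {\<phi>. wf_fm arF arR \<phi> \<and> sat M e \<phi>}"

definition complete_types :: "('f \<Rightarrow> nat) \<Rightarrow> ('r \<Rightarrow> nat) \<Rightarrow> ('f,'r,nat) fm set \<Rightarrow> ('f,'r,'v) fm set set" where
  "complete_types arF arR T = {p.
     (\<forall>\<phi>\<in>p. wf_fm arF arR \<phi>) \<and>
     (\<forall>\<phi>. wf_fm arF arR \<phi> \<longrightarrow> \<phi> \<in> p \<or> FNeg \<phi> \<in> p) \<and>
     (\<forall>F. finite F \<and> F \<subseteq> p \<longrightarrow>
        (\<exists>(M :: (nat,'f,'r) struc) e. is_model arF M T \<and> range e \<subseteq> carr M \<and> (\<forall>\<phi>\<in>F. sat M e \<phi>)))}"

definition logic_topology :: "('f \<Rightarrow> nat) \<Rightarrow> ('r \<Rightarrow> nat) \<Rightarrow> ('f,'r,nat) fm set \<Rightarrow> ('f,'r,'v) fm set topology" where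
  "logic_topology arF arR T = topology_generated_by
     {{p \<in> complete_types arF arR T. \<phi> \<in> p} | \<phi>. wf_fm arF arR \<phi>}"

text \<open>Pair of N-indexed sequences as an assignment for variables 2 \<times> N:
  x_i = (False, i), y_i = (True, i).\<close>

definition pr :: "(nat \<Rightarrow> 'a) \<Rightarrow> (nat \<Rightarrow> 'a) \<Rightarrow> bool \<times> nat \<Rightarrow> 'a" where
  "pr a b = (\<lambda>(c, i). if c then b i else a i)"

definition tp2 :: "('f \<Rightarrow> nat) \<Rightarrow> ('r \<Rightarrow> nat) \<Rightarrow> ('a,'f,'r) struc \<Rightarrow> (nat \<Rightarrow> 'a) \<Rightarrow> (nat \<Rightarrow> 'a)
     \<Rightarrow> ('f,'r,bool \<times> nat) fm set" where
  "tp2 arF arR M a b = tp arF arR M (pr a b)"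

definition enum :: "('a,'f,'r) struc \<Rightarrow> (nat \<Rightarrow> 'a) \<Rightarrow> bool" where
  "enum M a \<longleftrightarrow> range a = carr M"

definition G0 :: "('f \<Rightarrow> nat) \<Rightarrow> ('r \<Rightarrow> nat) \<Rightarrow> ('f,'r,nat) fm set \<Rightarrow> ('f,'r,bool \<times> nat) fm set set" where
  "G0 arF arR T = {tp2 arF arR M a b | (M :: (nat,'f,'r) struc) a b.
      is_model arF M T \<and> enum M a \<and> enum M b}"

definition B0 :: "('f \<Rightarrow> nat) \<Rightarrow> ('r \<Rightarrow> nat) \<Rightarrow> ('f,'r,nat) fm set \<Rightarrow> ('f,'r,bool \<times> nat) fm set set" where
  "B0 arF arR T = {p \<in> G0 arF arR T. \<forall>i. FEq (Var (False, i)) (Var (True, i)) \<in> p}"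

definition G0_topology :: "('f \<Rightarrow> nat) \<Rightarrow> ('r \<Rightarrow> nat) \<Rightarrow> ('f,'r,nat) fm set \<Rightarrow> ('f,'r,bool \<times> nat) fm set topology" where
  "G0_topology arF arR T = subtopology (logic_topology arF arR T) (G0 arF arR T)"

definition G0_inv :: "('f \<Rightarrow> nat) \<Rightarrow> ('r \<Rightarrow> nat) \<Rightarrow> ('f,'r,nat) fm set \<Rightarrow> ('f,'r,bool \<times> nat) fm set \<Rightarrow> ('f,'r,bool \<times> nat) fm set" where
  "G0_inv arF arR T g = (THE h. \<exists>(M :: (nat,'f,'r) struc) a b.
      is_model arF M T \<and> enum M a \<and> enum M b \<and> g = tp2 arF arR M a b \<and> h = tp2 arF arR M b a)"

definition G0_composable :: "('f \<Rightarrow> nat) \<Rightarrow> ('r \<Rightarrow> nat) \<Rightarrow> ('f,'r,nat) fm set \<Rightarrow> ('f,'r,bool \<times> nat) fm set \<Rightarrow> ('f,'r,bool \<times> nat) fm set \<Rightarrow> bool" where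
  "G0_composable arF arR T g h \<longleftrightarrow> (\<exists>(M :: (nat,'f,'r) struc) a b (M' :: (nat,'f,'r) struc) b' c.
      is_model arF M T \<and> enum M a \<and> enum M b \<and> is_model arF M' T \<and> enum M' b' \<and> enum M' c \<and>
      g = tp2 arF arR M a b \<and> h = tp2 arF arR M' b' c \<and>
      (tp arF arR M b :: ('f,'r,nat) fm set) = tp arF arR M' b')"

definition G0_mul :: "('f \<Rightarrow> nat) \<Rightarrow> ('r \<Rightarrow> nat) \<Rightarrow> ('f,'r,nat) fm set \<Rightarrow> ('f,'r,bool \<times> nat) fm set \<Rightarrow> ('f,'r,bool \<times> nat) fm set \<Rightarrow> ('f,'r,bool \<times> nat) fm set" where
  "G0_mul arF arR T g h = (THE k. \<exists>(M :: (nat,'f,'r) struc) a b c.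
      is_model arF M T \<and> enum M a \<and> enum M b \<and> enum M c \<and>
      g = tp2 arF arR M a b \<and> h = tp2 arF arR M b c \<and> k = tp2 arF arR M a c)"

definition Polish_space :: "'a topology \<Rightarrow> bool" where
  "Polish_space X \<longleftrightarrow> separable_space X \<and> completely_metrizable_space X"

definition open_topological_groupoid ::
  "'g topology \<Rightarrow> 'g set \<Rightarrow> ('g \<Rightarrow> 'g \<Rightarrow> bool) \<Rightarrow> ('g \<Rightarrow> 'g \<Rightarrow> 'g) \<Rightarrow> ('g \<Rightarrow> 'g) \<Rightarrow> bool" where
  "open_topological_groupoid X B cmp mul iv \<longleftrightarrow>
    (let G = topspace X; s = (\<lambda>g. mul (iv g) g); t = (\<lambda>g. mul g (iv g)) in
      (\<forall>g\<in>G. iv g \<in> G \<and> iv (iv g) = g) \<and>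
      (\<forall>g\<in>G. \<forall>h\<in>G. cmp g h \<longrightarrow> mul g h \<in> G) \<and>
      (\<forall>g\<in>G. cmp (iv g) g \<and> cmp g (iv g)) \<and>
      (\<forall>g\<in>G. \<forall>h\<in>G. cmp g h \<longleftrightarrow> s g = t h) \<and>
      (\<forall>g\<in>G. \<forall>h\<in>G. \<forall>k\<in>G. cmp g h \<and> cmp h k \<longrightarrow>
          cmp (mul g h) k \<and> cmp g (mul h k) \<and> mul (mul g h) k = mul g (mul h k)) \<and>
      (\<forall>g\<in>G. \<forall>h\<in>G. cmp g h \<longrightarrow> mul (iv g) (mul g h) = h \<and> mul (mul g h) (iv h) = g) \<and>
      B = s ` G \<and>
      continuous_map X X iv \<and>
      continuous_map (subtopology (prod_topology X X) {(g, h). g \<in> G \<and> h \<in> G \<and> cmp g h}) X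
        (\<lambda>(g, h). mul g h) \<and>
      open_map X (subtopology X B) s)"

end

theory Submission
  imports Defs
begin

text \<open>The whole groupoid structure rests on one fact: the type of \<open>e \<circ> \<sigma>\<close> is determined by
  the type of \<open>e\<close>, by renaming variables. If \<open>c\<close> only takes values among the entries of \<open>b\<close>,
  then \<open>c = b \<circ> \<kappa>\<close>, so \<open>tp(b, c)\<close> is determined by \<open>tp(b)\<close> and \<open>\<kappa>\<close>; this makes composition
  and inversion well defined without constructing isomorphisms between models. As a formula
  mentions only finitely many variables, the same argument works on basic open sets and gives
  continuity of composition and openness of the source map.

  For Polishness, \<open>G0\<close> consists exactly of the complete types of pairs whose two sequences
  have the same entries and which satisfy the Tarski--Vaught test, since each such type is
  realised in its term model. Read on indicator functions, these conditions cut out a countable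
  intersection of open and closed subsets of the Polish space of real functions on formulas.\<close>

section \<open>Renaming of variables\<close>

lemma finite_fv_trm: "finite (fv_trm t)"
  by (induction t) auto

lemma finite_fv_fm: "finite (fv_fm \<phi>)"
  by (induction \<phi>) (auto simp: finite_fv_trm)

lemma evl_cong: "(\<And>v. v \<in> fv_trm t \<Longrightarrow> e v = e' v) \<Longrightarrow> evl M e t = evl M e' t"
proof (induction t)
  case (Fn f ts)
  have "map (evl M e) ts = map (evl M e') ts"
    by (rule map_cong[OF refl], rule Fn.IH) (use Fn.prems in auto)
  then show ?case by (simp only: evl.simps)
qed simp

lemma sat_cong: "(\<And>v. v \<in> fv_fm \<phi> \<Longrightarrow> e v = e' v) \<Longrightarrow> sat M e \<phi> = sat M e' \<phi>"
proof (induction \<phi> arbitrary: e e')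
  case (FEq s t)
  then show ?case
    using evl_cong[of s e e' M] evl_cong[of t e e' M] by auto
next
  case (FRel r ts)
  have "map (evl M e) ts = map (evl M e') ts"
    by (rule map_cong[OF refl], rule evl_cong) (use FRel.prems in auto)
  then show ?case by (simp only: sat.simps)
next
  case (FEx v \<phi>)
  then have "sat M (e(v := x)) \<phi> = sat M (e'(v := x)) \<phi>" for x
    by (intro FEx.IH) auto
  then show ?case by simp
next
  case (FNeg \<phi>)
  have "sat M e \<phi> = sat M e' \<phi>"
    using FNeg.prems by (intro FNeg.IH) auto
  then show ?case by simp
next
  case (FConj \<phi> \<psi>)
  have "sat M e \<phi> = sat M e' \<phi>" "sat M e \<psi> = sat M e' \<psi>"
    using FConj.prems by (intro FConj.IH; auto)+
  then show ?case by simp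
qed simp

lemma evl_map_trm: "evl M e (map_trm id \<sigma> t) = evl M (e \<circ> \<sigma>) t"
  by (induction t) (auto cong: map_cong)

lemma wf_map_trm: "wf_trm arF (map_trm id \<sigma> t) = wf_trm arF t"
  by (induction t) auto

definition fresh :: "'v set \<Rightarrow> 'v" where
  "fresh S = (SOME u. u \<notin> S)"

lemma fresh_notin: "infinite (UNIV :: 'v set) \<Longrightarrow> finite (S :: 'v set) \<Longrightarrow> fresh S \<notin> S"
  unfolding fresh_def by (rule someI_ex) (metis ex_new_if_finite)

primrec rename_fm :: "('v \<Rightarrow> 'w) \<Rightarrow> ('f,'r,'v) fm \<Rightarrow> ('f,'r,'w) fm" where
  "rename_fm \<sigma> FBot = FBot"
| "rename_fm \<sigma> (FEq s t) = FEq (map_trm id \<sigma> s) (map_trm id \<sigma> t)"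
| "rename_fm \<sigma> (FRel r ts) = FRel r (map (map_trm id \<sigma>) ts)"
| "rename_fm \<sigma> (FNeg \<phi>) = FNeg (rename_fm \<sigma> \<phi>)"
| "rename_fm \<sigma> (FConj \<phi> \<psi>) = FConj (rename_fm \<sigma> \<phi>) (rename_fm \<sigma> \<psi>)"
| "rename_fm \<sigma> (FEx v \<phi>) =
     (let u = fresh (\<sigma> ` (fv_fm \<phi> - {v})) in FEx u (rename_fm (\<sigma>(v := u)) \<phi>))"

lemma wf_rename_fm: "wf_fm arF arR (rename_fm \<sigma> \<phi>) = wf_fm arF arR \<phi>"
  by (induction \<phi> arbitrary: \<sigma>) (auto simp: wf_map_trm Let_def)

lemma sat_rename_fm:
  assumes "infinite (UNIV :: 'w set)"
  shows "sat M e (rename_fm (\<sigma> :: 'v \<Rightarrow> 'w) \<phi>) = sat M (e \<circ> \<sigma>) \<phi>"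
proof (induction \<phi> arbitrary: \<sigma> e)
  case (FEx v \<phi>)
  define u where "u = fresh (\<sigma> ` (fv_fm \<phi> - {v}))"
  have "u \<notin> \<sigma> ` (fv_fm \<phi> - {v})"
    unfolding u_def using assms by (simp add: fresh_notin finite_fv_fm)
  then have "sat M (e(u := x) \<circ> \<sigma>(v := u)) \<phi> = sat M ((e \<circ> \<sigma>)(v := x)) \<phi>" for x
    by (intro sat_cong) auto
  then have "sat M e (rename_fm \<sigma> (FEx v \<phi>)) = (\<exists>x\<in>carr M. sat M ((e \<circ> \<sigma>)(v := x)) \<phi>)"
    by (simp only: rename_fm.simps Let_def sat.simps FEx.IH flip: u_def)
  then show ?case by (simp only: sat.simps)
next
  case (FRel r ts)
  then show ?case by (simp add: evl_map_trm comp_def)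
qed (auto simp: evl_map_trm)

lemma infinite_UNIV_bool_nat [simp]: "infinite (UNIV :: (bool \<times> nat) set)"
  by (simp add: finite_prod)

definition Conjs :: "('f,'r,'v) fm list \<Rightarrow> ('f,'r,'v) fm" where
  "Conjs \<phi>s = foldr FConj \<phi>s (FNeg FBot)"

lemma sat_Conjs: "sat M e (Conjs \<phi>s) = (\<forall>\<phi>\<in>set \<phi>s. sat M e \<phi>)"
  unfolding Conjs_def by (induction \<phi>s) auto

lemma wf_Conjs: "wf_fm arF arR (Conjs \<phi>s) = (\<forall>\<phi>\<in>set \<phi>s. wf_fm arF arR \<phi>)"
  unfolding Conjs_def by (induction \<phi>s) auto

definition Exs :: "'v list \<Rightarrow> ('f,'r,'v) fm \<Rightarrow> ('f,'r,'v) fm" where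
  "Exs vs \<phi> = foldr FEx vs \<phi>"

lemma wf_Exs: "wf_fm arF arR (Exs vs \<phi>) = wf_fm arF arR \<phi>"
  unfolding Exs_def by (induction vs) auto

lemma sat_Exs: "sat M e (Exs vs \<phi>) \<longleftrightarrow>
   (\<exists>e'. (\<forall>v\<in>set vs. e' v \<in> carr M) \<and> sat M (override_on e e' (set vs)) \<phi>)"
proof (induction vs arbitrary: e)
  case Nil
  then show ?case by (simp add: Exs_def)
next
  case (Cons v vs)
  have "Exs (v # vs) \<phi> = FEx v (Exs vs \<phi>)"
    by (simp add: Exs_def)
  then have "sat M e (Exs (v # vs) \<phi>) \<longleftrightarrow> (\<exists>x\<in>carr M. \<exists>e'. (\<forall>w\<in>set vs. e' w \<in> carr M)
      \<and> sat M (override_on (e(v := x)) e' (set vs)) \<phi>)" (is "_ \<longleftrightarrow> ?L")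
    by (simp only: sat.simps Cons.IH)
  also have "?L \<longleftrightarrow> (\<exists>e'. (\<forall>w\<in>set (v # vs). e' w \<in> carr M)
      \<and> sat M (override_on e e' (set (v # vs))) \<phi>)" (is "_ \<longleftrightarrow> ?R")
  proof
    assume ?L
    then obtain x e' where "x \<in> carr M" "\<forall>w\<in>set vs. e' w \<in> carr M"
      and sat: "sat M (override_on (e(v := x)) e' (set vs)) \<phi>"
      by blast
    define e'' where "e'' = e'(v := if v \<in> set vs then e' v else x)"
    have "override_on (e(v := x)) e' (set vs) = override_on e e'' (set (v # vs))"
      by (auto simp: override_on_def e''_def)
    then show ?R
      using \<open>x \<in> carr M\<close> \<open>\<forall>w\<in>set vs. e' w \<in> carr M\<close> sat
      by (intro exI[of _ e'']) (auto simp: e''_def)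
  next
    assume ?R
    then obtain e' where "\<forall>w\<in>set (v # vs). e' w \<in> carr M"
      and sat: "sat M (override_on e e' (set (v # vs))) \<phi>"
      by blast
    moreover have "override_on e e' (set (v # vs)) = override_on (e(v := e' v)) e' (set vs)"
      by (auto simp: override_on_def)
    ultimately show ?L
      by (intro bexI[of _ "e' v"] exI[of _ e']) auto
  qed
  finally show ?case .
qed

section \<open>Complete types\<close>

lemma evl_in_carr:
  assumes "is_struc arF M" "range e \<subseteq> carr M" "wf_trm arF t"
  shows "evl M e t \<in> carr M"
  using assms(3)
proof (induction t)
  case (Fn f ts)
  then have "set (map (evl M e) ts) \<subseteq> carr M"
    by auto
  then show ?case
    using assms(1) Fn.prems unfolding is_struc_def by simp
qed (use assms(2) in auto)

lemma is_model_struc: "is_model arF M T \<Longrightarrow> is_struc arF M"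
  unfolding is_model_def by blast

context
  fixes arF :: "'f \<Rightarrow> nat" and arR :: "'r \<Rightarrow> nat" and T :: "('f,'r,nat) fm set"
    and p :: "('f,'r,'v) fm set"
  assumes p: "p \<in> complete_types arF arR T"
begin

lemma complete_types_wf: "\<phi> \<in> p \<Longrightarrow> wf_fm arF arR \<phi>"
  using p by (simp add: complete_types_def)

lemma complete_types_max: "wf_fm arF arR \<phi> \<Longrightarrow> \<phi> \<in> p \<or> FNeg \<phi> \<in> p"
  using p by (simp add: complete_types_def)

lemma complete_types_finitely_sat:
  assumes "finite F" "F \<subseteq> p"
  shows "\<exists>(M :: (nat,'f,'r) struc) e. is_model arF M T \<and> range e \<subseteq> carr M \<and> (\<forall>\<phi>\<in>F. sat M e \<phi>)"
  using p assms by (simp add: complete_types_def)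

lemma complete_types_closed:
  assumes "finite F" "F \<subseteq> p" "wf_fm arF arR \<psi>"
    and "\<And>(M :: (nat,'f,'r) struc) e. is_model arF M T \<Longrightarrow> range e \<subseteq> carr M \<Longrightarrow>
      \<forall>\<phi>\<in>F. sat M e \<phi> \<Longrightarrow> sat M e \<psi>"
  shows "\<psi> \<in> p"
proof (rule ccontr)
  assume "\<psi> \<notin> p"
  then have "insert (FNeg \<psi>) F \<subseteq> p"
    using complete_types_max[OF assms(3)] assms(2) by blast
  then obtain M :: "(nat,'f,'r) struc" and e where
    "is_model arF M T" "range e \<subseteq> carr M" "\<forall>\<phi>\<in>insert (FNeg \<psi>) F. sat M e \<phi>"
    using complete_types_finitely_sat assms(1) by (meson finite_insert)
  then show False
    using assms(4) by (meson insertCI sat.simps(4))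
qed

lemma complete_types_equiv:
  assumes "finite E" "E \<subseteq> p" "wf_fm arF arR \<phi>" "wf_fm arF arR \<psi>"
    and "\<And>(M :: (nat,'f,'r) struc) e. is_model arF M T \<Longrightarrow> range e \<subseteq> carr M \<Longrightarrow>
      \<forall>\<theta>\<in>E. sat M e \<theta> \<Longrightarrow> (sat M e \<phi> \<longleftrightarrow> sat M e \<psi>)"
  shows "\<phi> \<in> p \<longleftrightarrow> \<psi> \<in> p"
proof
  assume "\<phi> \<in> p"
  then show "\<psi> \<in> p"
    using assms by (intro complete_types_closed[of "insert \<phi> E"]) auto
next
  assume "\<psi> \<in> p"
  then show "\<phi> \<in> p"
    using assms by (intro complete_types_closed[of "insert \<psi> E"]) auto
qed

lemma complete_types_FNeg: "wf_fm arF arR \<phi> \<Longrightarrow> FNeg \<phi> \<in> p \<longleftrightarrow> \<phi> \<notin> p"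
proof -
  assume wf: "wf_fm arF arR \<phi>"
  have "\<not> (\<phi> \<in> p \<and> FNeg \<phi> \<in> p)"
    using complete_types_finitely_sat[of "{\<phi>, FNeg \<phi>}"] by auto
  then show ?thesis
    using complete_types_max[OF wf] by blast
qed

lemma complete_types_FConj:
  assumes "wf_fm arF arR \<phi>" "wf_fm arF arR \<psi>"
  shows "FConj \<phi> \<psi> \<in> p \<longleftrightarrow> \<phi> \<in> p \<and> \<psi> \<in> p"
proof
  assume "FConj \<phi> \<psi> \<in> p"
  then show "\<phi> \<in> p \<and> \<psi> \<in> p"
    using assms by (auto intro: complete_types_closed[of "{FConj \<phi> \<psi>}"])
next
  assume "\<phi> \<in> p \<and> \<psi> \<in> p"
  then show "FConj \<phi> \<psi> \<in> p"
    using assms by (intro complete_types_closed[of "{\<phi>, \<psi>}"]) auto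
qed

lemma complete_types_FBot: "FBot \<notin> p"
  using complete_types_finitely_sat[of "{FBot}"] by auto

lemma complete_types_top: "FNeg FBot \<in> p"
  using complete_types_closed[of "{}" "FNeg FBot"] by auto

end

lemma tp_in_complete_types:
  assumes "is_model arF (M :: (nat,'f,'r) struc) T" "range e \<subseteq> carr M"
  shows "tp arF arR M e \<in> complete_types arF arR T"
  unfolding complete_types_def tp_def using assms by (auto intro!: exI[of _ M] exI[of _ e])

lemma tp_comp:
  assumes "infinite (UNIV :: 'w set)"
  shows "tp arF arR M (e \<circ> (\<sigma> :: 'v \<Rightarrow> 'w)) = {\<phi>. rename_fm \<sigma> \<phi> \<in> tp arF arR M e}"
  unfolding tp_def by (simp add: sat_rename_fm[OF assms] wf_rename_fm)

lemma tp_comp_eq: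
  assumes "infinite (UNIV :: 'w set)" "tp arF arR M e = tp arF arR N e'"
  shows "tp arF arR M (e \<circ> (\<sigma> :: 'v \<Rightarrow> 'w)) = tp arF arR N (e' \<circ> \<sigma>)"
  using assms by (simp add: tp_comp)

lemma tp_cong:
  "(\<And>v. v \<in> fv_fm \<phi> \<Longrightarrow> e v = e' v) \<Longrightarrow> \<phi> \<in> tp arF arR M e \<longleftrightarrow> \<phi> \<in> tp arF arR M e'"
  unfolding tp_def using sat_cong by blast

lemma Exs_in_tp:
  "Exs vs \<phi> \<in> tp arF arR M e \<longleftrightarrow>
    (\<exists>e'. (\<forall>v\<in>set vs. e' v \<in> carr M) \<and> \<phi> \<in> tp arF arR M (override_on e e' (set vs)))"
  by (simp add: tp_def sat_Exs wf_Exs) blast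

section \<open>Types of pairs of sequences\<close>

lemma pr_simps [simp]: "pr a b (False, i) = a i" "pr a b (True, i) = b i"
  by (simp_all add: pr_def)

lemma range_pr: "range (pr a b) = range a \<union> range b"
proof
  show "range (pr a b) \<subseteq> range a \<union> range b"
    by (auto simp: pr_def split: prod.splits)
  show "range a \<union> range b \<subseteq> range (pr a b)"
  proof (rule subsetI, elim UnE rangeE)
    fix x i assume "x = a i"
    then show "x \<in> range (pr a b)" by (metis pr_simps(1) rangeI)
  next
    fix x i assume "x = b i"
    then show "x \<in> range (pr a b)" by (metis pr_simps(2) rangeI)
  qed
qed

lemma FEq_xy_in_tp2 [simp]: "FEq (Var (False, i)) (Var (True, j)) \<in> tp2 arF arR M a b \<longleftrightarrow> a i = b j"
  by (simp add: tp2_def tp_def)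

lemma range_subset_imp_comp:
  assumes "range c \<subseteq> range b"
  obtains \<kappa> where "c = b \<circ> \<kappa>"
proof -
  have "\<forall>j. \<exists>i. c j = b i"
    using assms by blast
  then obtain \<kappa> where "\<forall>j. c j = b (\<kappa> j)"
    by metis
  then show thesis
    using that by (auto simp: fun_eq_iff)
qed

lemma tp2_eq_imp_tp_eq:
  assumes "tp2 arF arR M a b = tp2 arF arR N a' b'"
  shows "tp arF arR M a = tp arF arR N a'" "tp arF arR M b = tp arF arR N b'"
proof -
  have "tp arF arR M (pr a b \<circ> Pair d) = tp arF arR N (pr a' b' \<circ> Pair d)" for d
    using assms unfolding tp2_def by (intro tp_comp_eq) simp_all
  from this[of False] this[of True]
  show "tp arF arR M a = tp arF arR N a'" "tp arF arR M b = tp arF arR N b'"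
    by (simp_all add: comp_def)
qed

definition swap_xy :: "bool \<times> nat \<Rightarrow> bool \<times> nat" where
  "swap_xy = (\<lambda>(d, i). (\<not> d, i))"

lemma rename_swap_xy_in_tp2:
  "rename_fm swap_xy \<phi> \<in> tp2 arF arR M a b \<longleftrightarrow> \<phi> \<in> tp2 arF arR M b a"
proof -
  have "pr b a = pr a b \<circ> swap_xy"
    by (simp add: fun_eq_iff pr_def swap_xy_def split: prod.split)
  then show ?thesis
    unfolding tp2_def by (simp add: tp_comp)
qed

lemma tp2_swap_eq:
  assumes "tp2 arF arR M a b = tp2 arF arR N a' b'"
  shows "tp2 arF arR M b a = tp2 arF arR N b' a'"
proof (rule set_eqI)
  fix \<phi>
  have "\<phi> \<in> tp2 arF arR M b a \<longleftrightarrow> rename_fm swap_xy \<phi> \<in> tp2 arF arR M a b"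
    by (rule rename_swap_xy_in_tp2[symmetric])
  also have "\<dots> \<longleftrightarrow> \<phi> \<in> tp2 arF arR N b' a'"
    unfolding assms by (rule rename_swap_xy_in_tp2)
  finally show "\<phi> \<in> tp2 arF arR M b a \<longleftrightarrow> \<phi> \<in> tp2 arF arR N b' a'" .
qed

lemma tp2_extend:
  assumes "tp arF arR M b = tp arF arR N b'" "range c' = range b'"
  shows "\<exists>c. range c = range b \<and> tp2 arF arR M b c = tp2 arF arR N b' c'"
proof -
  obtain \<kappa> where \<kappa>: "c' = b' \<circ> \<kappa>"
    by (rule range_subset_imp_comp[OF equalityD1[OF assms(2)]])
  define \<tau> :: "bool \<times> nat \<Rightarrow> nat" where "\<tau> = (\<lambda>(d, i). if d then \<kappa> i else i)"
  have "pr b (b \<circ> \<kappa>) = b \<circ> \<tau>" "pr b' c' = b' \<circ> \<tau>"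
    by (simp_all add: fun_eq_iff pr_def \<tau>_def \<kappa> split: prod.split)
  then have tp2_eq: "tp2 arF arR M b (b \<circ> \<kappa>) = tp2 arF arR N b' c'"
    using tp_comp_eq[OF _ assms(1)] unfolding tp2_def by simp
  have "range b \<subseteq> range (b \<circ> \<kappa>)"
  proof
    fix x assume "x \<in> range b"
    then obtain i where i: "x = b i" by blast
    obtain j where "b' i = c' j"
      using assms(2) by (metis rangeE rangeI)
    then have "b i = (b \<circ> \<kappa>) j"
      using FEq_xy_in_tp2[of i j] tp2_eq by metis
    then show "x \<in> range (b \<circ> \<kappa>)"
      using i by auto
  qed
  then have "range (b \<circ> \<kappa>) = range b"
    by auto
  then show ?thesis
    using tp2_eq by blast
qed

lemma tp2_compose_eq:
  assumes ab: "tp2 arF arR M a b = tp2 arF arR N a' b'"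
    and bc: "tp2 arF arR M b c = tp2 arF arR N b' c'" and "range c \<subseteq> range b"
  shows "tp2 arF arR M a c = tp2 arF arR N a' c'"
proof -
  obtain \<kappa> where \<kappa>: "c = b \<circ> \<kappa>"
    by (rule range_subset_imp_comp[OF assms(3)])
  have "c' = b' \<circ> \<kappa>"
  proof
    fix j
    have "b (\<kappa> j) = c j"
      using \<kappa> by simp
    then show "c' j = (b' \<circ> \<kappa>) j"
      using FEq_xy_in_tp2[of "\<kappa> j" j] bc by (metis comp_apply)
  qed
  define \<tau> :: "bool \<times> nat \<Rightarrow> bool \<times> nat" where "\<tau> = (\<lambda>(d, i). if d then (True, \<kappa> i) else (False, i))"
  have "pr a c = pr a b \<circ> \<tau>" "pr a' c' = pr a' b' \<circ> \<tau>"
    using \<kappa> \<open>c' = b' \<circ> \<kappa>\<close> by (simp_all add: fun_eq_iff pr_def \<tau>_def split: prod.split)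
  moreover have "tp arF arR M (pr a b \<circ> \<tau>) = tp arF arR N (pr a' b' \<circ> \<tau>)"
    using ab unfolding tp2_def by (intro tp_comp_eq) simp_all
  ultimately show ?thesis
    unfolding tp2_def by simp
qed

lemma fv_fm_bounded: "\<exists>m. \<forall>d i. (d, i) \<in> fv_fm (\<phi> :: ('f,'r,bool \<times> nat) fm) \<longrightarrow> i < m"
proof -
  obtain m where "snd ` fv_fm \<phi> \<subseteq> {..<m}"
    using finite_nat_bounded finite_fv_fm finite_imageI by metis
  then have "(d, i) \<in> fv_fm \<phi> \<Longrightarrow> i < m" for d i
    by (metis image_eqI lessThan_iff snd_conv subsetD)
  then show ?thesis
    by blast
qed

lemma enum_prepend:
  assumes "enum M b" "\<And>i. i < m \<Longrightarrow> x i \<in> carr M"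
  shows "enum M (\<lambda>i. if i < m then x i else b (i - m))"
  unfolding enum_def
proof
  show "range (\<lambda>i. if i < m then x i else b (i - m)) \<subseteq> carr M"
    using assms unfolding enum_def by auto
  show "carr M \<subseteq> range (\<lambda>i. if i < m then x i else b (i - m))"
  proof
    fix y assume "y \<in> carr M"
    then obtain k where "y = b k"
      using assms(1) unfolding enum_def by blast
    then show "y \<in> range (\<lambda>i. if i < m then x i else b (i - m))"
      by (intro range_eqI[of _ _ "k + m"]) simp
  qed
qed

lemma Conjs_xy_in_tp2:
  "Conjs (map (\<lambda>i. FEq (Var (False, f i)) (Var (True, g i))) is) \<in> tp2 arF arR M a b
    \<longleftrightarrow> (\<forall>i\<in>set is. a (f i) = b (g i))"
  by (simp add: tp2_def tp_def sat_Conjs wf_Conjs)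

text \<open>Reading \<open>a\<close> and \<open>c\<close> off as subsequences of \<open>b\<close> on the finitely many indices occurring in
  \<open>\<phi>\<close> turns \<open>\<phi>\<close> into a formula about \<open>(b, c)\<close>.\<close>

lemma tp2_compose_local:
  fixes arF :: "'f \<Rightarrow> nat" and arR :: "'r \<Rightarrow> nat"
  assumes "range a \<subseteq> range b" "range c \<subseteq> range b" "\<phi> \<in> tp2 arF arR M a c"
  obtains \<alpha> \<gamma> :: "('f,'r,bool \<times> nat) fm" where "\<alpha> \<in> tp2 arF arR M a b" "\<gamma> \<in> tp2 arF arR M b c"
    "\<And>N a' b' c'. \<alpha> \<in> tp2 arF arR N a' b' \<Longrightarrow> \<gamma> \<in> tp2 arF arR N b' c' \<Longrightarrow> \<phi> \<in> tp2 arF arR N a' c'"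
proof -
  obtain m where m: "\<And>d i. (d, i) \<in> fv_fm \<phi> \<Longrightarrow> i < m"
    using fv_fm_bounded by blast
  obtain \<tau> where \<tau>: "a = b \<circ> \<tau>"
    by (rule range_subset_imp_comp[OF assms(1)])
  obtain \<sigma> where \<sigma>: "c = b \<circ> \<sigma>"
    by (rule range_subset_imp_comp[OF assms(2)])
  define \<rho> where "\<rho> = (\<lambda>(d, i). (False, if d then \<sigma> i else \<tau> i))"
  define \<alpha> :: "('f,'r,bool \<times> nat) fm"
    where "\<alpha> = Conjs (map (\<lambda>i. FEq (Var (False, i)) (Var (True, \<tau> i))) [0..<m])"
  define \<beta> :: "('f,'r,bool \<times> nat) fm"
    where "\<beta> = Conjs (map (\<lambda>j. FEq (Var (False, \<sigma> j)) (Var (True, j))) [0..<m])"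
  show thesis
  proof (rule that)
    show "\<alpha> \<in> tp2 arF arR M a b"
      unfolding \<alpha>_def Conjs_xy_in_tp2 using \<tau> by simp
    have "pr b c \<circ> \<rho> = pr a c"
      using \<tau> \<sigma> by (simp add: fun_eq_iff pr_def \<rho>_def split: prod.split)
    then have "tp arF arR M (pr a c) = {\<psi>. rename_fm \<rho> \<psi> \<in> tp arF arR M (pr b c)}"
      by (metis tp_comp infinite_UNIV_bool_nat)
    then have "rename_fm \<rho> \<phi> \<in> tp2 arF arR M b c"
      using assms(3) unfolding tp2_def by simp
    moreover have "\<beta> \<in> tp2 arF arR M b c"
      unfolding \<beta>_def Conjs_xy_in_tp2 using \<sigma> by simp
    ultimately show "FConj \<beta> (rename_fm \<rho> \<phi>) \<in> tp2 arF arR M b c"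
      by (simp add: tp2_def tp_def)
  next
    fix N a' b' c'
    assume \<alpha>: "\<alpha> \<in> tp2 arF arR N a' b'" and "FConj \<beta> (rename_fm \<rho> \<phi>) \<in> tp2 arF arR N b' c'"
    then have \<beta>: "\<beta> \<in> tp2 arF arR N b' c'" and "rename_fm \<rho> \<phi> \<in> tp2 arF arR N b' c'"
      by (simp_all add: tp2_def tp_def)
    have ab: "\<forall>i<m. a' i = b' (\<tau> i)"
      using \<alpha> unfolding \<alpha>_def Conjs_xy_in_tp2 by simp
    have bc: "\<forall>j<m. b' (\<sigma> j) = c' j"
      using \<beta> unfolding \<beta>_def Conjs_xy_in_tp2 by simp
    have "\<phi> \<in> tp arF arR N (pr b' c' \<circ> \<rho>)"
      using \<open>rename_fm \<rho> \<phi> \<in> tp2 arF arR N b' c'\<close> by (simp add: tp2_def tp_comp)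
    moreover have "(pr b' c' \<circ> \<rho>) v = pr a' c' v" if "v \<in> fv_fm \<phi>" for v
      using that m[of "fst v" "snd v"] ab bc by (cases v) (auto simp: \<rho>_def)
    ultimately show "\<phi> \<in> tp2 arF arR N a' c'"
      unfolding tp2_def using tp_cong by blast
  qed
qed

text \<open>Quantifying away the \<open>x\<close>-variables of \<open>\<phi>\<close> gives a formula about \<open>(b, b)\<close>; any witness
  for it extends to an enumeration.\<close>

lemma tp2_source_local:
  fixes arF :: "'f \<Rightarrow> nat" and arR :: "'r \<Rightarrow> nat"
  assumes "range a \<subseteq> carr M" "range b \<subseteq> carr M" "\<phi> \<in> tp2 arF arR M a b"
  obtains \<psi> :: "('f,'r,bool \<times> nat) fm" where "\<psi> \<in> tp2 arF arR M b b"
    "\<And>N b'. enum N b' \<Longrightarrow> \<psi> \<in> tp2 arF arR N b' b' \<Longrightarrow> \<exists>a'. enum N a' \<and> \<phi> \<in> tp2 arF arR N a' b'"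
proof -
  obtain m where m: "\<And>d i. (d, i) \<in> fv_fm \<phi> \<Longrightarrow> i < m"
    using fv_fm_bounded by blast
  define vs where "vs = map (Pair False) [0..<m]"
  have vs: "v \<in> set vs \<longleftrightarrow> \<not> fst v \<and> snd v < m" for v
    unfolding vs_def by (cases v) auto
  show thesis
  proof (rule that)
    have "override_on (pr b b) (pr a b) (set vs) v = pr a b v" if "v \<in> fv_fm \<phi>" for v
      using that m[of "fst v" "snd v"] vs[of v] by (cases v) (auto simp: override_on_def)
    then have "\<phi> \<in> tp arF arR M (override_on (pr b b) (pr a b) (set vs))"
      using assms(3) tp_cong unfolding tp2_def by blast
    moreover have "\<forall>v\<in>set vs. pr a b v \<in> carr M"
      using assms(1,2) by (auto simp: pr_def split: prod.split)
    ultimately show "Exs vs \<phi> \<in> tp2 arF arR M b b"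
      unfolding tp2_def Exs_in_tp by blast
  next
    fix N b' assume b': "enum N b'" and "Exs vs \<phi> \<in> tp2 arF arR N b' b'"
    then obtain e' where e': "\<forall>v\<in>set vs. e' v \<in> carr N"
      and \<phi>: "\<phi> \<in> tp arF arR N (override_on (pr b' b') e' (set vs))"
      unfolding tp2_def Exs_in_tp by blast
    define a' where "a' = (\<lambda>i. if i < m then e' (False, i) else b' (i - m))"
    have "enum N a'"
      unfolding a'_def using e' vs by (intro enum_prepend[OF b']) simp
    moreover have "override_on (pr b' b') e' (set vs) v = pr a' b' v" if "v \<in> fv_fm \<phi>" for v
      using that m[of "fst v" "snd v"] vs[of v] by (cases v) (auto simp: override_on_def a'_def)
    ultimately show "\<exists>a'. enum N a' \<and> \<phi> \<in> tp2 arF arR N a' b'"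
      using \<phi> tp_cong unfolding tp2_def by blast
  qed
qed

section \<open>The groupoid operations on \<open>G0\<close>\<close>

context
  fixes arF :: "'f \<Rightarrow> nat" and arR :: "'r \<Rightarrow> nat" and T :: "('f,'r,nat) fm set"
begin

lemma G0E:
  assumes "g \<in> G0 arF arR T"
  obtains M :: "(nat,'f,'r) struc" and a b
  where "is_model arF M T" "enum M a" "enum M b" "g = tp2 arF arR M a b"
  using assms unfolding G0_def by blast

lemma G0I:
  "is_model arF (M :: (nat,'f,'r) struc) T \<Longrightarrow> enum M a \<Longrightarrow> enum M b \<Longrightarrow> tp2 arF arR M a b \<in> G0 arF arR T"
  unfolding G0_def by blast

lemma G0_subset_complete_types: "G0 arF arR T \<subseteq> complete_types arF arR T"
proof
  fix g assume "g \<in> G0 arF arR T"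
  then obtain M :: "(nat,'f,'r) struc" and a b
    where "is_model arF M T" "enum M a" "enum M b" "g = tp2 arF arR M a b"
    by (rule G0E)
  then show "g \<in> complete_types arF arR T"
    unfolding tp2_def by (simp add: tp_in_complete_types range_pr enum_def)
qed

lemma G0_inv_tp2:
  assumes "is_model arF (M :: (nat,'f,'r) struc) T" "enum M a" "enum M b"
  shows "G0_inv arF arR T (tp2 arF arR M a b) = tp2 arF arR M b a"
  unfolding G0_inv_def
proof (rule the_equality)
  show "\<exists>(M' :: (nat,'f,'r) struc) a' b'. is_model arF M' T \<and> enum M' a' \<and> enum M' b' \<and>
      tp2 arF arR M a b = tp2 arF arR M' a' b' \<and> tp2 arF arR M b a = tp2 arF arR M' b' a'"
    using assms by blast
next
  fix h assume "\<exists>(M' :: (nat,'f,'r) struc) a' b'. is_model arF M' T \<and> enum M' a' \<and> enum M' b' \<and>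
      tp2 arF arR M a b = tp2 arF arR M' a' b' \<and> h = tp2 arF arR M' b' a'"
  then obtain M' :: "(nat,'f,'r) struc" and a' b'
    where eq: "tp2 arF arR M a b = tp2 arF arR M' a' b'" and h: "h = tp2 arF arR M' b' a'"
    by blast
  show "h = tp2 arF arR M b a"
    using h tp2_swap_eq[OF eq] by simp
qed

lemma G0_mul_tp2:
  assumes "is_model arF (M :: (nat,'f,'r) struc) T" "enum M a" "enum M b" "enum M c"
  shows "G0_mul arF arR T (tp2 arF arR M a b) (tp2 arF arR M b c) = tp2 arF arR M a c"
  unfolding G0_mul_def
proof (rule the_equality)
  show "\<exists>(M' :: (nat,'f,'r) struc) a' b' c'. is_model arF M' T \<and> enum M' a' \<and> enum M' b' \<and> enum M' c' \<and>
      tp2 arF arR M a b = tp2 arF arR M' a' b' \<and> tp2 arF arR M b c = tp2 arF arR M' b' c' \<and>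
      tp2 arF arR M a c = tp2 arF arR M' a' c'"
    using assms by blast
next
  fix k assume "\<exists>(M' :: (nat,'f,'r) struc) a' b' c'. is_model arF M' T \<and> enum M' a' \<and> enum M' b' \<and>
      enum M' c' \<and> tp2 arF arR M a b = tp2 arF arR M' a' b' \<and> tp2 arF arR M b c = tp2 arF arR M' b' c' \<and>
      k = tp2 arF arR M' a' c'"
  then obtain M' :: "(nat,'f,'r) struc" and a' b' c' where
    ab: "tp2 arF arR M a b = tp2 arF arR M' a' b'" and bc: "tp2 arF arR M b c = tp2 arF arR M' b' c'"
    and k: "k = tp2 arF arR M' a' c'"
    by blast
  have "range c \<subseteq> range b"
    using assms(3,4) by (simp add: enum_def)
  then show "k = tp2 arF arR M a c"
    using tp2_compose_eq[OF ab bc] k by simp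
qed

lemma G0_composable_tp2:
  "is_model arF (M :: (nat,'f,'r) struc) T \<Longrightarrow> enum M a \<Longrightarrow> enum M b \<Longrightarrow> enum M c \<Longrightarrow>
    G0_composable arF arR T (tp2 arF arR M a b) (tp2 arF arR M b c)"
  unfolding G0_composable_def by blast

lemma G0_composable_tp2E:
  assumes "is_model arF (M :: (nat,'f,'r) struc) T" "enum M a" "enum M b"
    and "G0_composable arF arR T (tp2 arF arR M a b) h"
  obtains c where "enum M c" "h = tp2 arF arR M b c"
proof -
  obtain M1 :: "(nat,'f,'r) struc" and a1 b1 and M2 :: "(nat,'f,'r) struc" and b2 c2 where
    "enum M2 b2" "enum M2 c2" "tp2 arF arR M a b = tp2 arF arR M1 a1 b1"
    and h: "h = tp2 arF arR M2 b2 c2" and "tp arF arR M1 b1 = tp arF arR M2 b2"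
    using assms(4) unfolding G0_composable_def by blast
  then have "tp arF arR M b = tp arF arR M2 b2" "range c2 = range b2"
    using tp2_eq_imp_tp_eq(2) by (metis, simp add: enum_def)
  then obtain c where "range c = range b" "tp2 arF arR M b c = tp2 arF arR M2 b2 c2"
    using tp2_extend by blast
  then show thesis
    using that assms(3) h unfolding enum_def by simp
qed

lemma G0_source_tp2:
  assumes "is_model arF (M :: (nat,'f,'r) struc) T" "enum M a" "enum M b"
  shows "G0_mul arF arR T (G0_inv arF arR T (tp2 arF arR M a b)) (tp2 arF arR M a b) = tp2 arF arR M b b"
  using assms by (simp add: G0_inv_tp2 G0_mul_tp2)

lemma G0_target_tp2:
  assumes "is_model arF (M :: (nat,'f,'r) struc) T" "enum M a" "enum M b"
  shows "G0_mul arF arR T (tp2 arF arR M a b) (G0_inv arF arR T (tp2 arF arR M a b)) = tp2 arF arR M a a"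
  using assms by (simp add: G0_inv_tp2 G0_mul_tp2)

lemma G0_inv_closed: "g \<in> G0 arF arR T \<Longrightarrow> G0_inv arF arR T g \<in> G0 arF arR T"
  by (erule G0E) (simp add: G0_inv_tp2 G0I)

lemma G0_inv_inv: "g \<in> G0 arF arR T \<Longrightarrow> G0_inv arF arR T (G0_inv arF arR T g) = g"
  by (erule G0E) (simp add: G0_inv_tp2)

lemma G0_composableE:
  assumes "g \<in> G0 arF arR T" "G0_composable arF arR T g h"
  obtains M :: "(nat,'f,'r) struc" and a b c
  where "is_model arF M T" "enum M a" "enum M b" "enum M c"
    "g = tp2 arF arR M a b" "h = tp2 arF arR M b c"
proof -
  obtain M :: "(nat,'f,'r) struc" and a b
    where M: "is_model arF M T" "enum M a" "enum M b" and g: "g = tp2 arF arR M a b"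
    using assms(1) by (rule G0E)
  moreover obtain c where "enum M c" "h = tp2 arF arR M b c"
    using G0_composable_tp2E[OF M] assms(2) g by blast
  ultimately show thesis
    using that by blast
qed

lemma G0_mul_closed:
  assumes "g \<in> G0 arF arR T" "G0_composable arF arR T g h"
  shows "G0_mul arF arR T g h \<in> G0 arF arR T"
  using assms by (rule G0_composableE) (simp add: G0_mul_tp2 G0I)

lemma G0_composable_inv:
  "g \<in> G0 arF arR T \<Longrightarrow>
    G0_composable arF arR T (G0_inv arF arR T g) g \<and> G0_composable arF arR T g (G0_inv arF arR T g)"
  by (erule G0E) (simp add: G0_inv_tp2 G0_composable_tp2)

lemma G0_composable_iff:
  assumes "g \<in> G0 arF arR T" "h \<in> G0 arF arR T"
  shows "G0_composable arF arR T g h \<longleftrightarrow>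
    G0_mul arF arR T (G0_inv arF arR T g) g = G0_mul arF arR T h (G0_inv arF arR T h)"
proof
  assume "G0_composable arF arR T g h"
  with assms(1) show "G0_mul arF arR T (G0_inv arF arR T g) g = G0_mul arF arR T h (G0_inv arF arR T h)"
    by (rule G0_composableE) (simp add: G0_source_tp2 G0_target_tp2)
next
  obtain M :: "(nat,'f,'r) struc" and a b
    where M: "is_model arF M T" "enum M a" "enum M b" and g: "g = tp2 arF arR M a b"
    using assms(1) by (rule G0E)
  obtain M' :: "(nat,'f,'r) struc" and b' c'
    where M': "is_model arF M' T" "enum M' b'" "enum M' c'" and h: "h = tp2 arF arR M' b' c'"
    using assms(2) by (rule G0E)
  assume "G0_mul arF arR T (G0_inv arF arR T g) g = G0_mul arF arR T h (G0_inv arF arR T h)"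
  then have "tp2 arF arR M b b = tp2 arF arR M' b' b'"
    using M M' g h by (simp add: G0_source_tp2 G0_target_tp2)
  then have "tp arF arR M b = tp arF arR M' b'"
    by (rule tp2_eq_imp_tp_eq(1))
  then show "G0_composable arF arR T g h"
    unfolding G0_composable_def using M M' g h by blast
qed

lemma G0_mul_assoc:
  assumes "g \<in> G0 arF arR T" "G0_composable arF arR T g h" "G0_composable arF arR T h k"
  shows "G0_composable arF arR T (G0_mul arF arR T g h) k \<and> G0_composable arF arR T g (G0_mul arF arR T h k)
    \<and> G0_mul arF arR T (G0_mul arF arR T g h) k = G0_mul arF arR T g (G0_mul arF arR T h k)"
  using assms(1,2)
proof (rule G0_composableE)
  fix M :: "(nat,'f,'r) struc" and a b c
  assume M: "is_model arF M T" "enum M a" "enum M b" "enum M c"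
    and gh: "g = tp2 arF arR M a b" "h = tp2 arF arR M b c"
  obtain d where "enum M d" "k = tp2 arF arR M c d"
    using G0_composable_tp2E[OF M(1,3,4)] assms(3) gh(2) by blast
  then show ?thesis
    using M gh by (simp add: G0_mul_tp2 G0_composable_tp2)
qed

lemma G0_mul_cancel:
  assumes "g \<in> G0 arF arR T" "G0_composable arF arR T g h"
  shows "G0_mul arF arR T (G0_inv arF arR T g) (G0_mul arF arR T g h) = h
    \<and> G0_mul arF arR T (G0_mul arF arR T g h) (G0_inv arF arR T h) = g"
  using assms by (rule G0_composableE) (simp add: G0_mul_tp2 G0_inv_tp2)

lemma B0_iff:
  "q \<in> B0 arF arR T \<longleftrightarrow> (\<exists>(M :: (nat,'f,'r) struc) b. is_model arF M T \<and> enum M b \<and> q = tp2 arF arR M b b)"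
proof
  assume "q \<in> B0 arF arR T"
  then have q: "q \<in> G0 arF arR T" and diag: "\<forall>i. FEq (Var (False, i)) (Var (True, i)) \<in> q"
    unfolding B0_def by auto
  obtain M :: "(nat,'f,'r) struc" and a b
    where "is_model arF M T" "enum M a" "enum M b" "q = tp2 arF arR M a b"
    using q by (rule G0E)
  moreover have "a = b"
    using diag \<open>q = tp2 arF arR M a b\<close> by auto
  ultimately show "\<exists>(M :: (nat,'f,'r) struc) b. is_model arF M T \<and> enum M b \<and> q = tp2 arF arR M b b"
    by blast
next
  assume "\<exists>(M :: (nat,'f,'r) struc) b. is_model arF M T \<and> enum M b \<and> q = tp2 arF arR M b b"
  then show "q \<in> B0 arF arR T"
    unfolding B0_def by (auto intro: G0I)
qed

lemma B0_eq_source_image: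
  "B0 arF arR T = (\<lambda>g. G0_mul arF arR T (G0_inv arF arR T g) g) ` G0 arF arR T"
proof
  show "B0 arF arR T \<subseteq> (\<lambda>g. G0_mul arF arR T (G0_inv arF arR T g) g) ` G0 arF arR T"
    by (auto simp: B0_iff G0_source_tp2 intro!: image_eqI G0I)
  show "(\<lambda>g. G0_mul arF arR T (G0_inv arF arR T g) g) ` G0 arF arR T \<subseteq> B0 arF arR T"
  proof (rule image_subsetI, erule G0E)
    fix g and M :: "(nat,'f,'r) struc" and a b
    assume "is_model arF M T" "enum M a" "enum M b" "g = tp2 arF arR M a b"
    then show "G0_mul arF arR T (G0_inv arF arR T g) g \<in> B0 arF arR T"
      unfolding B0_iff by (simp add: G0_source_tp2) blast
  qed
qed

end

section \<open>The topology on \<open>G0\<close>\<close>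

context
  fixes arF :: "'f \<Rightarrow> nat" and arR :: "'r \<Rightarrow> nat" and T :: "('f,'r,nat) fm set"
begin

lemma topspace_logic_topology: "topspace (logic_topology arF arR T) = complete_types arF arR T"
proof -
  have "topspace (logic_topology arF arR T) =
      \<Union>{{p \<in> complete_types arF arR T. \<phi> \<in> p} | \<phi>. wf_fm arF arR \<phi>}"
    unfolding logic_topology_def by (rule topology_generated_by_topspace)
  also have "\<dots> = complete_types arF arR T"
  proof
    show "complete_types arF arR T \<subseteq> \<Union>{{p \<in> complete_types arF arR T. \<phi> \<in> p} | \<phi>. wf_fm arF arR \<phi>}"
    proof
      fix p assume p: "p \<in> complete_types arF arR T"
      have "p \<in> {q \<in> complete_types arF arR T. FNeg FBot \<in> q}"
        using p complete_types_top[OF p] by simp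
      moreover have "wf_fm arF arR (FNeg FBot)"
        by simp
      ultimately show "p \<in> \<Union>{{p \<in> complete_types arF arR T. \<phi> \<in> p} | \<phi>. wf_fm arF arR \<phi>}"
        by blast
    qed
  qed blast
  finally show ?thesis .
qed

lemma logic_topology_basis:
  assumes "openin (logic_topology arF arR T) U" "p \<in> U"
  shows "\<exists>\<phi>. wf_fm arF arR \<phi> \<and> \<phi> \<in> p \<and> {q \<in> complete_types arF arR T. \<phi> \<in> q} \<subseteq> U"
proof -
  have "generate_topology_on {{p \<in> complete_types arF arR T. \<phi> \<in> p} | \<phi>. wf_fm arF arR \<phi>} U"
    using assms(1) unfolding logic_topology_def by (rule openin_topology_generated_by)
  moreover have "p \<in> complete_types arF arR T"
    using openin_subset[OF assms(1)] assms(2) topspace_logic_topology by auto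
  ultimately show ?thesis
    using assms(2)
  proof (induction arbitrary: p)
    case (Int U V)
    obtain \<phi> where \<phi>: "wf_fm arF arR \<phi>" "\<phi> \<in> p" "{q \<in> complete_types arF arR T. \<phi> \<in> q} \<subseteq> U"
      using Int.IH(1) Int.prems by blast
    obtain \<psi> where \<psi>: "wf_fm arF arR \<psi>" "\<psi> \<in> p" "{q \<in> complete_types arF arR T. \<psi> \<in> q} \<subseteq> V"
      using Int.IH(2) Int.prems by blast
    have "FConj \<phi> \<psi> \<in> p"
      using complete_types_FConj[OF Int.prems(1) \<phi>(1) \<psi>(1)] \<phi> \<psi> by simp
    moreover have "{q \<in> complete_types arF arR T. FConj \<phi> \<psi> \<in> q} \<subseteq> U \<inter> V"
      using complete_types_FConj[OF _ \<phi>(1) \<psi>(1)] \<phi>(3) \<psi>(3) by blast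
    ultimately show ?case
      using \<phi>(1) \<psi>(1) by (intro exI[of _ "FConj \<phi> \<psi>"]) simp
  next
    case (UN K)
    then obtain U where "U \<in> K" "p \<in> U"
      by blast
    then show ?case
      using UN.IH UN.prems by blast
  qed auto
qed

definition G0_basic :: "('f,'r,bool \<times> nat) fm \<Rightarrow> ('f,'r,bool \<times> nat) fm set set" where
  "G0_basic \<phi> = {q \<in> G0 arF arR T. \<phi> \<in> q}"

lemma topspace_G0_topology: "topspace (G0_topology arF arR T) = G0 arF arR T"
  unfolding G0_topology_def topspace_subtopology topspace_logic_topology
  using G0_subset_complete_types by blast

lemma openin_G0_basic: "openin (G0_topology arF arR T) (G0_basic \<phi>)"
proof (cases "wf_fm arF arR \<phi>")
  case True
  have "openin (logic_topology arF arR T) {q \<in> complete_types arF arR T. \<phi> \<in> q}"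
    unfolding logic_topology_def by (rule topology_generated_by_Basis) (use True in blast)
  moreover have "G0_basic \<phi> = {q \<in> complete_types arF arR T. \<phi> \<in> q} \<inter> G0 arF arR T"
    unfolding G0_basic_def using G0_subset_complete_types by blast
  ultimately show ?thesis
    unfolding G0_topology_def by (simp add: openin_subtopology_Int)
next
  case False
  then have "G0_basic \<phi> = {}"
    unfolding G0_basic_def using G0_subset_complete_types complete_types_wf by blast
  then show ?thesis
    by simp
qed

lemma G0_topology_basis:
  assumes "openin (G0_topology arF arR T) U" "g \<in> U"
  shows "\<exists>\<phi>. wf_fm arF arR \<phi> \<and> \<phi> \<in> g \<and> G0_basic \<phi> \<subseteq> U"
proof -
  obtain V where V: "openin (logic_topology arF arR T) V" "U = V \<inter> G0 arF arR T"
    using assms(1) unfolding G0_topology_def openin_subtopology by blast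
  then obtain \<phi> where "wf_fm arF arR \<phi>" "\<phi> \<in> g" "{q \<in> complete_types arF arR T. \<phi> \<in> q} \<subseteq> V"
    using logic_topology_basis assms(2) by blast
  then show ?thesis
    using V G0_subset_complete_types unfolding G0_basic_def by blast
qed

lemma continuous_map_into_G0I:
  assumes "f ` topspace Z \<subseteq> G0 arF arR T"
    and "\<And>z \<phi>. z \<in> topspace Z \<Longrightarrow> wf_fm arF arR \<phi> \<Longrightarrow> \<phi> \<in> f z \<Longrightarrow>
      \<exists>V. openin Z V \<and> z \<in> V \<and> (\<forall>z'\<in>V. \<phi> \<in> f z')"
  shows "continuous_map Z (G0_topology arF arR T) f"
  unfolding continuous_map topspace_G0_topology
proof (intro conjI allI impI assms(1))
  fix U assume U: "openin (G0_topology arF arR T) U"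
  show "openin Z {z \<in> topspace Z. f z \<in> U}"
  proof (subst openin_subopen, intro ballI)
    fix z assume "z \<in> {z \<in> topspace Z. f z \<in> U}"
    then have z: "z \<in> topspace Z" "f z \<in> U"
      by auto
    obtain \<phi> where \<phi>: "wf_fm arF arR \<phi>" "\<phi> \<in> f z" "G0_basic \<phi> \<subseteq> U"
      using G0_topology_basis[OF U z(2)] by blast
    obtain V where V: "openin Z V" "z \<in> V" "\<forall>z'\<in>V. \<phi> \<in> f z'"
      using assms(2)[OF z(1) \<phi>(1,2)] by blast
    have "V \<subseteq> {z \<in> topspace Z. f z \<in> U}"
    proof
      fix z' assume "z' \<in> V"
      then have "z' \<in> topspace Z"
        using openin_subset[OF V(1)] by blast
      moreover have "f z' \<in> G0_basic \<phi>"
        using assms(1) V(3) \<open>z' \<in> V\<close> calculation unfolding G0_basic_def by blast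
      ultimately show "z' \<in> {z \<in> topspace Z. f z \<in> U}"
        using \<phi>(3) by blast
    qed
    then show "\<exists>V. openin Z V \<and> z \<in> V \<and> V \<subseteq> {z \<in> topspace Z. f z \<in> U}"
      using V by blast
  qed
qed

lemma continuous_map_G0_inv:
  "continuous_map (G0_topology arF arR T) (G0_topology arF arR T) (G0_inv arF arR T)"
proof (rule continuous_map_into_G0I)
  show "G0_inv arF arR T ` topspace (G0_topology arF arR T) \<subseteq> G0 arF arR T"
    using G0_inv_closed by (auto simp: topspace_G0_topology)
next
  fix g \<phi> assume g: "g \<in> topspace (G0_topology arF arR T)" and "\<phi> \<in> G0_inv arF arR T g"
  have inv_basic: "g' \<in> G0_basic (rename_fm swap_xy \<phi>) \<longleftrightarrow> g' \<in> G0 arF arR T \<and> \<phi> \<in> G0_inv arF arR T g'"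
    for g'
    by (auto simp: G0_basic_def G0_inv_tp2 rename_swap_xy_in_tp2 intro: G0I elim!: G0E)
  show "\<exists>V. openin (G0_topology arF arR T) V \<and> g \<in> V \<and> (\<forall>g'\<in>V. \<phi> \<in> G0_inv arF arR T g')"
    using g \<open>\<phi> \<in> G0_inv arF arR T g\<close> inv_basic openin_G0_basic
    unfolding topspace_G0_topology by blast
qed

lemma continuous_map_G0_mul:
  "continuous_map (subtopology (prod_topology (G0_topology arF arR T) (G0_topology arF arR T))
      {(g, h). g \<in> G0 arF arR T \<and> h \<in> G0 arF arR T \<and> G0_composable arF arR T g h})
    (G0_topology arF arR T) (\<lambda>(g, h). G0_mul arF arR T g h)"
  (is "continuous_map (subtopology ?GG ?C) _ _")
proof (rule continuous_map_into_G0I)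
  have top: "topspace (subtopology ?GG ?C) = ?C"
    by (auto simp: topspace_G0_topology)
  then show "(\<lambda>(g, h). G0_mul arF arR T g h) ` topspace (subtopology ?GG ?C) \<subseteq> G0 arF arR T"
    using G0_mul_closed by auto
  fix z \<phi> assume "z \<in> topspace (subtopology ?GG ?C)" and \<phi>: "\<phi> \<in> (\<lambda>(g, h). G0_mul arF arR T g h) z"
  then obtain g h where z: "z = (g, h)" and g: "g \<in> G0 arF arR T" and gh: "G0_composable arF arR T g h"
    using top by auto
  obtain M :: "(nat,'f,'r) struc" and a b c
    where M: "is_model arF M T" "enum M a" "enum M b" and c: "enum M c"
      and g_eq: "g = tp2 arF arR M a b" and h_eq: "h = tp2 arF arR M b c"
    using g gh by (rule G0_composableE)
  have "\<phi> \<in> tp2 arF arR M a c"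
    using \<phi> M c z g_eq h_eq by (simp add: G0_mul_tp2)
  moreover have "range a \<subseteq> range b" "range c \<subseteq> range b"
    using M c by (simp_all add: enum_def)
  ultimately obtain \<alpha> \<gamma> where "\<alpha> \<in> g" "\<gamma> \<in> h"
    and local: "\<And>(N :: (nat,'f,'r) struc) a' b' c'.
      \<alpha> \<in> tp2 arF arR N a' b' \<Longrightarrow> \<gamma> \<in> tp2 arF arR N b' c' \<Longrightarrow> \<phi> \<in> tp2 arF arR N a' c'"
    using tp2_compose_local g_eq h_eq by metis
  let ?V = "(G0_basic \<alpha> \<times> G0_basic \<gamma>) \<inter> ?C"
  have "openin (subtopology ?GG ?C) ?V"
    by (simp add: openin_subtopology_Int openin_prod_Times_iff openin_G0_basic)
  moreover have "z \<in> ?V"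
    using z g gh \<open>\<alpha> \<in> g\<close> \<open>\<gamma> \<in> h\<close> top \<open>z \<in> topspace (subtopology ?GG ?C)\<close>
    by (auto simp: G0_basic_def)
  moreover have "\<phi> \<in> (\<lambda>(g, h). G0_mul arF arR T g h) z'" if "z' \<in> ?V" for z'
  proof -
    obtain g' h' where z': "z' = (g', h')" "g' \<in> G0 arF arR T" "G0_composable arF arR T g' h'"
      "\<alpha> \<in> g'" "\<gamma> \<in> h'"
      using \<open>z' \<in> ?V\<close> by (auto simp: G0_basic_def)
    obtain N :: "(nat,'f,'r) struc" and a' b' c'
      where N: "is_model arF N T" "enum N a'" "enum N b'" and c': "enum N c'"
        and g': "g' = tp2 arF arR N a' b'" and h': "h' = tp2 arF arR N b' c'"
      using z'(2,3) by (rule G0_composableE)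
    show ?thesis
      using local z' N c' g' h' by (simp add: G0_mul_tp2)
  qed
  ultimately show "\<exists>V. openin (subtopology ?GG ?C) V \<and> z \<in> V \<and>
      (\<forall>z'\<in>V. \<phi> \<in> (\<lambda>(g, h). G0_mul arF arR T g h) z')"
    by blast
qed

lemma open_map_G0_source:
  "open_map (G0_topology arF arR T) (subtopology (G0_topology arF arR T) (B0 arF arR T))
     (\<lambda>g. G0_mul arF arR T (G0_inv arF arR T g) g)"
  (is "open_map ?G ?B ?s")
  unfolding open_map_def
proof (intro allI impI)
  fix U assume U: "openin ?G U"
  show "openin ?B (?s ` U)"
  proof (subst openin_subopen, intro ballI)
    fix y assume "y \<in> ?s ` U"
    then obtain g where "g \<in> U" and y: "y = ?s g"
      by blast
    then have "g \<in> G0 arF arR T"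
      using openin_subset[OF U] topspace_G0_topology by blast
    then obtain M :: "(nat,'f,'r) struc" and a b
      where M: "is_model arF M T" "enum M a" "enum M b" and g: "g = tp2 arF arR M a b"
      by (rule G0E)
    obtain \<phi> where "\<phi> \<in> g" "G0_basic \<phi> \<subseteq> U"
      using G0_topology_basis[OF U \<open>g \<in> U\<close>] by blast
    then obtain \<psi> where \<psi>: "\<psi> \<in> tp2 arF arR M b b"
      and local: "\<And>(N :: (nat,'f,'r) struc) b'. enum N b' \<Longrightarrow> \<psi> \<in> tp2 arF arR N b' b' \<Longrightarrow>
        \<exists>a'. enum N a' \<and> \<phi> \<in> tp2 arF arR N a' b'"
      using tp2_source_local[of a M b \<phi>] M g unfolding enum_def by blast
    let ?V = "G0_basic \<psi> \<inter> B0 arF arR T"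
    have "openin ?B ?V"
      by (simp add: openin_subtopology_Int openin_G0_basic)
    moreover have "y \<in> ?V"
      using M \<psi> y g B0_iff[of y] by (auto simp: G0_basic_def G0_source_tp2 G0I)
    moreover have "?V \<subseteq> ?s ` U"
    proof
      fix q assume q: "q \<in> ?V"
      then obtain N :: "(nat,'f,'r) struc" and b'
        where N: "is_model arF N T" "enum N b'" and q_eq: "q = tp2 arF arR N b' b'"
        using B0_iff by blast
      then obtain a' where a': "enum N a'" and "\<phi> \<in> tp2 arF arR N a' b'"
        using local q by (auto simp: G0_basic_def)
      then have "tp2 arF arR N a' b' \<in> U"
        using \<open>G0_basic \<phi> \<subseteq> U\<close> N by (auto simp: G0_basic_def G0I)
      moreover have "q = ?s (tp2 arF arR N a' b')"
        using N a' q_eq by (simp add: G0_source_tp2)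
      ultimately show "q \<in> ?s ` U"
        by blast
    qed
    ultimately show "\<exists>V. openin ?B V \<and> y \<in> V \<and> V \<subseteq> ?s ` U"
      by blast
  qed
qed

lemma open_topological_groupoid_G0:
  "open_topological_groupoid (G0_topology arF arR T) (B0 arF arR T)
     (G0_composable arF arR T) (G0_mul arF arR T) (G0_inv arF arR T)"
  unfolding open_topological_groupoid_def Let_def topspace_G0_topology
  apply (intro conjI)
  subgoal using G0_inv_closed G0_inv_inv by blast
  subgoal using G0_mul_closed by blast
  subgoal using G0_composable_inv by blast
  subgoal using G0_composable_iff by blast
  subgoal using G0_mul_assoc by blast
  subgoal using G0_mul_cancel by blast
  subgoal by (rule B0_eq_source_image)
  subgoal by (rule continuous_map_G0_inv)
  subgoal by (rule continuous_map_G0_mul)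
  subgoal by (rule open_map_G0_source)
  done

end

section \<open>Characterising \<open>G0\<close> by formulas\<close>

text \<open>The last condition is the Tarski--Vaught test for the set of entries of the pair.\<close>

definition Henkin_pair_types ::
  "('f \<Rightarrow> nat) \<Rightarrow> ('r \<Rightarrow> nat) \<Rightarrow> ('f,'r,nat) fm set \<Rightarrow> ('f,'r,bool \<times> nat) fm set set" where
  "Henkin_pair_types arF arR T = {p \<in> complete_types arF arR T.
     (\<forall>i. \<exists>j. FEq (Var (False, i)) (Var (True, j)) \<in> p) \<and>
     (\<forall>j. \<exists>i. FEq (Var (False, i)) (Var (True, j)) \<in> p) \<and>
     (\<forall>v \<phi>. wf_fm arF arR \<phi> \<and> FEx v \<phi> \<in> p \<longrightarrow> (\<exists>w. w \<noteq> v \<and> FEx v (FConj (FEq (Var v) (Var w)) \<phi>) \<in> p))}"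

lemma tp2_Tarski_Vaught:
  assumes "range a = carr M" "range b = carr M" "FEx v \<phi> \<in> tp2 arF arR M a b"
  shows "\<exists>w. w \<noteq> v \<and> FEx v (FConj (FEq (Var v) (Var w)) \<phi>) \<in> tp2 arF arR M a b"
proof -
  obtain x where x: "x \<in> carr M" "sat M ((pr a b)(v := x)) \<phi>" and wf: "wf_fm arF arR \<phi>"
    using assms(3) unfolding tp2_def tp_def by auto
  obtain i j where "a i = x" "b j = x"
    using x(1) assms(1,2) by (metis rangeE)
  have "\<exists>w. w \<noteq> v \<and> pr a b w = x"
  proof (cases "v = (False, i)")
    case True
    then show ?thesis
      using \<open>b j = x\<close> by (intro exI[of _ "(True, j)"]) auto
  next
    case False
    then show ?thesis
      using \<open>a i = x\<close> by (intro exI[of _ "(False, i)"]) auto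
  qed
  then obtain w where w: "w \<noteq> v" "pr a b w = x"
    by blast
  then have "sat M (pr a b) (FEx v (FConj (FEq (Var v) (Var w)) \<phi>))"
    using x by (auto intro!: bexI[of _ x])
  moreover have "wf_fm arF arR (FEx v (FConj (FEq (Var v) (Var w)) \<phi>))"
    using wf by simp
  ultimately show ?thesis
    using w(1) unfolding tp2_def tp_def by blast
qed

lemma G0_subset_Henkin_pair_types:
  fixes arF :: "'f \<Rightarrow> nat" and arR :: "'r \<Rightarrow> nat"
  shows "G0 arF arR T \<subseteq> Henkin_pair_types arF arR T"
proof
  fix p assume "p \<in> G0 arF arR T"
  then obtain M :: "(nat,'f,'r) struc" and a b
    where M: "is_model arF M T" "enum M a" "enum M b" and p: "p = tp2 arF arR M a b"
    by (rule G0E)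
  have ab: "range a = carr M" "range b = carr M"
    using M unfolding enum_def by auto
  then have "p \<in> complete_types arF arR T"
    unfolding p tp2_def using M by (simp add: tp_in_complete_types range_pr)
  moreover have "\<forall>i. \<exists>j. a i = b j" "\<forall>j. \<exists>i. a i = b j"
    using ab by (metis rangeE rangeI)+
  ultimately show "p \<in> Henkin_pair_types arF arR T"
    unfolding Henkin_pair_types_def p mem_Collect_eq FEq_xy_in_tp2
    using tp2_Tarski_Vaught[OF ab] by blast
qed

text \<open>The elements of the term model are the variables up to equality in \<open>p\<close>, each represented
  by the least index of an equal \<open>x\<close>-variable.\<close>

locale term_model =
  fixes arF :: "'f \<Rightarrow> nat" and arR :: "'r \<Rightarrow> nat" and T :: "('f,'r,nat) fm set"
    and p :: "('f,'r,bool \<times> nat) fm set"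
  assumes Henkin: "p \<in> Henkin_pair_types arF arR T"
    and wf_T: "\<forall>\<sigma>\<in>T. wf_fm arF arR \<sigma>"
begin

lemma complete: "p \<in> complete_types arF arR T"
  using Henkin by (simp add: Henkin_pair_types_def)

lemma x_eq_y: "\<exists>j. FEq (Var (False, i)) (Var (True, j)) \<in> p"
  using Henkin unfolding Henkin_pair_types_def by blast

lemma y_eq_x: "\<exists>i. FEq (Var (False, i)) (Var (True, j)) \<in> p"
  using Henkin unfolding Henkin_pair_types_def by blast

lemma witness:
  "wf_fm arF arR \<phi> \<Longrightarrow> FEx v \<phi> \<in> p \<Longrightarrow> \<exists>w. w \<noteq> v \<and> FEx v (FConj (FEq (Var v) (Var w)) \<phi>) \<in> p"
  using Henkin unfolding Henkin_pair_types_def by blast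

lemmas p_closed = complete_types_closed[OF complete]

abbreviation eqv :: "bool \<times> nat \<Rightarrow> bool \<times> nat \<Rightarrow> bool" where
  "eqv v w \<equiv> FEq (Var v) (Var w) \<in> p"

lemma eqv_refl: "eqv v v"
  by (rule p_closed[of "{}"]) simp_all

lemma eqv_sym: "eqv v w \<Longrightarrow> eqv w v"
  by (rule p_closed[of "{FEq (Var v) (Var w)}"]) simp_all

lemma eqv_trans: "eqv u v \<Longrightarrow> eqv v w \<Longrightarrow> eqv u w"
  by (rule p_closed[of "{FEq (Var u) (Var v), FEq (Var v) (Var w)}"]) simp_all

definition rep :: "bool \<times> nat \<Rightarrow> nat" where
  "rep v = (LEAST i. eqv v (False, i))"

lemma rep_eqv: "eqv v (False, rep v)"
proof -
  have "\<exists>i. eqv v (False, i)"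
  proof (cases v)
    case (Pair d k)
    show ?thesis
    proof (cases d)
      case True
      obtain i where "eqv (False, i) (True, k)"
        using y_eq_x by blast
      then have "eqv v (False, i)"
        using Pair True by (simp add: eqv_sym)
      then show ?thesis ..
    next
      case False
      then have "eqv v (False, k)"
        using Pair eqv_refl by simp
      then show ?thesis ..
    qed
  qed
  then show ?thesis
    unfolding rep_def by (rule LeastI_ex)
qed

lemma rep_eq_iff: "rep v = rep w \<longleftrightarrow> eqv v w"
proof
  assume "rep v = rep w"
  then show "eqv v w"
    using rep_eqv[of v] rep_eqv[of w] eqv_sym eqv_trans by metis
next
  assume "eqv v w"
  then have "eqv v (False, i) \<longleftrightarrow> eqv w (False, i)" for i
    using eqv_sym eqv_trans by metis
  then show "rep v = rep w"
    unfolding rep_def by simp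
qed

lemma rep_False: "n \<in> range rep \<Longrightarrow> rep (False, n) = n"
proof (elim rangeE)
  fix v assume "n = rep v"
  moreover have "eqv (False, rep v) v"
    by (rule eqv_sym[OF rep_eqv])
  ultimately show "rep (False, n) = n"
    by (simp add: rep_eq_iff)
qed

definition TM :: "(nat,'f,'r) struc" where
  "TM = \<lparr>carr = range rep,
         fint = \<lambda>f ns. rep (SOME w. FEq (Fn f (map (\<lambda>n. Var (False, n)) ns)) (Var w) \<in> p),
         rint = \<lambda>r ns. FRel r (map (\<lambda>n. Var (False, n)) ns) \<in> p\<rparr>"

lemma TM_simps [simp]:
  "carr TM = range rep"
  "fint TM f ns = rep (SOME w. FEq (Fn f (map (\<lambda>n. Var (False, n)) ns)) (Var w) \<in> p)"
  "rint TM r ns = (FRel r (map (\<lambda>n. Var (False, n)) ns) \<in> p)"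
  by (simp_all add: TM_def)

lemma is_struc_TM: "is_struc arF TM"
  unfolding is_struc_def by auto

lemma term_eq_var:
  assumes "wf_trm arF t"
  shows "\<exists>w. FEq t (Var w) \<in> p"
proof -
  define v where "v = fresh (fv_trm t)"
  have v: "v \<notin> fv_trm t"
    unfolding v_def by (simp add: fresh_notin finite_fv_trm)
  have evl_upd: "evl N (e(v := x)) t = evl N e t"
    for N :: "(nat,'f,'r) struc" and e :: "bool \<times> nat \<Rightarrow> nat" and x
    by (rule evl_cong) (use v in auto)
  have "FEx v (FEq (Var v) t) \<in> p"
  proof (rule p_closed[of "{}"])
    fix N :: "(nat,'f,'r) struc" and e :: "bool \<times> nat \<Rightarrow> nat" assume "is_model arF N T" "range e \<subseteq> carr N"
    then have "evl N e t \<in> carr N"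
      using evl_in_carr[OF is_model_struc] assms by blast
    then show "sat N e (FEx v (FEq (Var v) t))"
      using evl_upd by auto
  qed (use assms in auto)
  moreover have "wf_fm arF arR (FEq (Var v) t)"
    using assms by simp
  ultimately obtain w where w: "w \<noteq> v" "FEx v (FConj (FEq (Var v) (Var w)) (FEq (Var v) t)) \<in> p"
    using witness by blast
  have "FEq t (Var w) \<in> p"
  proof (rule p_closed[of "{FEx v (FConj (FEq (Var v) (Var w)) (FEq (Var v) t))}"])
    fix N :: "(nat,'f,'r) struc" and e :: "bool \<times> nat \<Rightarrow> nat"
    assume "\<forall>\<phi>\<in>{FEx v (FConj (FEq (Var v) (Var w)) (FEq (Var v) t))}. sat N e \<phi>"
    then show "sat N e (FEq t (Var w))"
      using w(1) evl_upd by auto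
  qed (use w assms in auto)
  then show ?thesis
    by blast
qed

lemma evl_TM:
  fixes \<sigma> :: "'v \<Rightarrow> bool \<times> nat"
  assumes "wf_trm arF t"
  shows "FEq (map_trm id \<sigma> t) (Var (False, evl TM (rep \<circ> \<sigma>) t)) \<in> p"
  using assms
proof (induction t)
  case (Var u)
  then show ?case
    using rep_eqv by simp
next
  case (Fn f ts)
  define vs where "vs = map (evl TM (rep \<circ> \<sigma>)) ts"
  define w0 where "w0 = (SOME w. FEq (Fn f (map (\<lambda>n. Var (False, n)) vs)) (Var w) \<in> p)"
  have "\<exists>w. FEq (Fn f (map (\<lambda>n. Var (False, n)) vs)) (Var w) \<in> p"
    using Fn.prems by (intro term_eq_var) (simp add: vs_def)
  then have w0: "FEq (Fn f (map (\<lambda>n. Var (False, n)) vs)) (Var w0) \<in> p"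
    unfolding w0_def by (rule someI_ex)
  have evl_Fn: "evl TM (rep \<circ> \<sigma>) (Fn f ts) = rep w0"
    by (simp add: vs_def w0_def)
  let ?IH = "(\<lambda>t. FEq (map_trm id \<sigma> t) (Var (False, evl TM (rep \<circ> \<sigma>) t))) ` set ts"
  let ?E = "insert (FEq (Fn f (map (\<lambda>n. Var (False, n)) vs)) (Var w0))
    (insert (FEq (Var w0) (Var (False, rep w0))) ?IH)"
  have "FEq (map_trm id \<sigma> (Fn f ts)) (Var (False, rep w0)) \<in> p"
  proof (rule p_closed[of ?E])
    have "FEq (map_trm id \<sigma> t) (Var (False, evl TM (rep \<circ> \<sigma>) t)) \<in> p" if "t \<in> set ts" for t
      using Fn.IH[OF that] Fn.prems that by (simp add: comp_def id_def)
    then show "?E \<subseteq> p"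
      using w0 rep_eqv by blast
    show "wf_fm arF arR (FEq (map_trm id \<sigma> (Fn f ts)) (Var (False, rep w0)))"
      using Fn.prems by (simp add: wf_map_trm)
    fix N :: "(nat,'f,'r) struc" and e :: "bool \<times> nat \<Rightarrow> nat" assume "\<forall>\<phi>\<in>?E. sat N e \<phi>"
    then have args: "map (\<lambda>t. evl N e (map_trm id \<sigma> t)) ts = map (\<lambda>n. e (False, n)) vs"
      and "fint N f (map (\<lambda>n. e (False, n)) vs) = e w0" "e w0 = e (False, rep w0)"
      by (auto simp: vs_def comp_def)
    then show "sat N e (FEq (map_trm id \<sigma> (Fn f ts)) (Var (False, rep w0)))"
      by (simp add: comp_def)
  qed simp
  then show ?case
    unfolding evl_Fn .
qed

lemma evl_TM_in_carr:
  "wf_trm arF t \<Longrightarrow> evl TM (rep \<circ> \<sigma>) t \<in> range rep"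
  using evl_in_carr[OF is_struc_TM, of "rep \<circ> \<sigma>" t] by auto

lemma rename_FEx_in_p:
  fixes \<sigma> :: "'v \<Rightarrow> bool \<times> nat"
  assumes wf: "wf_fm arF arR \<phi>"
  shows "rename_fm \<sigma> (FEx v \<phi>) \<in> p \<longleftrightarrow> (\<exists>w. rename_fm (\<sigma>(v := w)) \<phi> \<in> p)"
proof
  assume "\<exists>w. rename_fm (\<sigma>(v := w)) \<phi> \<in> p"
  then obtain w where w: "rename_fm (\<sigma>(v := w)) \<phi> \<in> p"
    by blast
  show "rename_fm \<sigma> (FEx v \<phi>) \<in> p"
  proof (rule p_closed[of "{rename_fm (\<sigma>(v := w)) \<phi>}"])
    fix N :: "(nat,'f,'r) struc" and e :: "bool \<times> nat \<Rightarrow> nat"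
    assume "range e \<subseteq> carr N" "\<forall>\<psi>\<in>{rename_fm (\<sigma>(v := w)) \<phi>}. sat N e \<psi>"
    moreover have "e \<circ> \<sigma>(v := w) = (e \<circ> \<sigma>)(v := e w)"
      by (simp add: fun_eq_iff)
    ultimately have "sat N (e \<circ> \<sigma>) (FEx v \<phi>)"
      by (auto simp: sat_rename_fm)
    then show "sat N e (rename_fm \<sigma> (FEx v \<phi>))"
      by (simp only: sat_rename_fm[OF infinite_UNIV_bool_nat])
  qed (use w wf in \<open>auto simp: wf_rename_fm\<close>)
next
  assume ex: "rename_fm \<sigma> (FEx v \<phi>) \<in> p"
  define u where "u = fresh (\<sigma> ` (fv_fm \<phi> - {v}))"
  have u: "u \<notin> \<sigma> ` (fv_fm \<phi> - {v})"
    unfolding u_def by (simp add: fresh_notin finite_fv_fm)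
  let ?\<psi> = "rename_fm (\<sigma>(v := u)) \<phi>"
  have "FEx u ?\<psi> \<in> p"
    using ex by (simp add: u_def Let_def)
  moreover have "wf_fm arF arR ?\<psi>"
    using wf by (simp add: wf_rename_fm)
  ultimately obtain w where w: "w \<noteq> u" "FEx u (FConj (FEq (Var u) (Var w)) ?\<psi>) \<in> p"
    using witness by blast
  have "rename_fm (\<sigma>(v := w)) \<phi> \<in> p"
  proof (rule p_closed[of "{FEx u (FConj (FEq (Var u) (Var w)) ?\<psi>)}"])
    fix N :: "(nat,'f,'r) struc" and e :: "bool \<times> nat \<Rightarrow> nat"
    assume "\<forall>\<psi>\<in>{FEx u (FConj (FEq (Var u) (Var w)) ?\<psi>)}. sat N e \<psi>"
    then have "sat N (e(u := e w) \<circ> \<sigma>(v := u)) \<phi>"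
      using w(1) by (auto simp: sat_rename_fm)
    moreover have "sat N (e(u := e w) \<circ> \<sigma>(v := u)) \<phi> = sat N (e \<circ> \<sigma>(v := w)) \<phi>"
      by (rule sat_cong) (use u in auto)
    ultimately show "sat N e (rename_fm (\<sigma>(v := w)) \<phi>)"
      by (simp add: sat_rename_fm)
  qed (use w wf in \<open>auto simp: wf_rename_fm\<close>)
  then show "\<exists>w. rename_fm (\<sigma>(v := w)) \<phi> \<in> p"
    by blast
qed

lemma rename_FEq_in_p:
  fixes \<sigma> :: "'v \<Rightarrow> bool \<times> nat"
  assumes "wf_trm arF s" "wf_trm arF t"
  shows "rename_fm \<sigma> (FEq s t) \<in> p \<longleftrightarrow> sat TM (rep \<circ> \<sigma>) (FEq s t)"
proof -
  let ?s = "evl TM (rep \<circ> \<sigma>) s" and ?t = "evl TM (rep \<circ> \<sigma>) t"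
  let ?E = "{FEq (map_trm id \<sigma> s) (Var (False, ?s)), FEq (map_trm id \<sigma> t) (Var (False, ?t))}"
  have "rename_fm \<sigma> (FEq s t) \<in> p \<longleftrightarrow> FEq (Var (False, ?s)) (Var (False, ?t)) \<in> p"
    using evl_TM assms by (intro complete_types_equiv[OF complete, of ?E]) (auto simp: wf_map_trm)
  also have "\<dots> \<longleftrightarrow> rep (False, ?s) = rep (False, ?t)"
    by (rule rep_eq_iff[symmetric])
  also have "\<dots> \<longleftrightarrow> ?s = ?t"
    using evl_TM_in_carr[OF assms(1)] evl_TM_in_carr[OF assms(2)] by (simp add: rep_False)
  finally show ?thesis
    by (simp only: sat.simps)
qed

lemma rename_FRel_in_p:
  fixes \<sigma> :: "'v \<Rightarrow> bool \<times> nat"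
  assumes wf: "\<forall>t\<in>set ts. wf_trm arF t" "length ts = arR r"
  shows "rename_fm \<sigma> (FRel r ts) \<in> p \<longleftrightarrow> sat TM (rep \<circ> \<sigma>) (FRel r ts)"
proof -
  let ?E = "(\<lambda>t. FEq (map_trm id \<sigma> t) (Var (False, evl TM (rep \<circ> \<sigma>) t))) ` set ts"
  have "rename_fm \<sigma> (FRel r ts) \<in> p \<longleftrightarrow> FRel r (map (\<lambda>t. Var (False, evl TM (rep \<circ> \<sigma>) t)) ts) \<in> p"
  proof (rule complete_types_equiv[OF complete, of ?E])
    show "?E \<subseteq> p"
      using evl_TM wf by auto
    fix N :: "(nat,'f,'r) struc" and e :: "bool \<times> nat \<Rightarrow> nat" assume "\<forall>\<theta>\<in>?E. sat N e \<theta>"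
    then have "\<forall>t\<in>set ts. evl N e (map_trm id \<sigma> t) = e (False, evl TM (rep \<circ> \<sigma>) t)"
      by auto
    then show "sat N e (rename_fm \<sigma> (FRel r ts))
        \<longleftrightarrow> sat N e (FRel r (map (\<lambda>t. Var (False, evl TM (rep \<circ> \<sigma>) t)) ts))"
      by (simp cong: map_cong)
  qed (use wf in \<open>auto simp: wf_map_trm\<close>)
  then show ?thesis
    by (simp add: comp_def)
qed

lemma sat_TM:
  fixes \<phi> :: "('f,'r,'v) fm" and \<sigma> :: "'v \<Rightarrow> bool \<times> nat"
  assumes "wf_fm arF arR \<phi>"
  shows "sat TM (rep \<circ> \<sigma>) \<phi> \<longleftrightarrow> rename_fm \<sigma> \<phi> \<in> p"
  using assms
proof (induction \<phi> arbitrary: \<sigma>)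
  case FBot
  then show ?case
    using complete_types_FBot[OF complete] by simp
next
  case (FEq s t)
  show ?case
    by (rule rename_FEq_in_p[symmetric]) (use FEq.prems in simp_all)
next
  case (FRel r ts)
  show ?case
    by (rule rename_FRel_in_p[symmetric]) (use FRel.prems in simp_all)
next
  case (FNeg \<phi>)
  then show ?case
    using complete_types_FNeg[OF complete] by (simp add: wf_rename_fm)
next
  case (FConj \<phi> \<psi>)
  then show ?case
    using complete_types_FConj[OF complete] by (simp add: wf_rename_fm)
next
  case (FEx v \<phi>)
  have IH: "sat TM (rep \<circ> \<sigma>') \<phi> \<longleftrightarrow> rename_fm \<sigma>' \<phi> \<in> p" for \<sigma>'
    using FEx.IH FEx.prems by (simp add: comp_def)
  have "(rep \<circ> \<sigma>)(v := rep w) = rep \<circ> \<sigma>(v := w)" for w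
    by (simp add: fun_eq_iff)
  then have "sat TM (rep \<circ> \<sigma>) (FEx v \<phi>) \<longleftrightarrow> (\<exists>w. sat TM (rep \<circ> \<sigma>(v := w)) \<phi>)"
    by auto
  also have "\<dots> \<longleftrightarrow> (\<exists>w. rename_fm (\<sigma>(v := w)) \<phi> \<in> p)"
    by (simp only: IH)
  also have "\<dots> \<longleftrightarrow> rename_fm \<sigma> (FEx v \<phi>) \<in> p"
    by (rule rename_FEx_in_p[symmetric]) (use FEx.prems in simp)
  finally show ?case .
qed

lemma is_model_TM: "is_model arF TM T"
  unfolding is_model_def
proof (intro conjI ballI allI impI is_struc_TM)
  fix \<sigma>0 and e :: "nat \<Rightarrow> nat" assume \<sigma>0: "\<sigma>0 \<in> T" and "range e \<subseteq> carr TM"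
  then obtain \<tau> where \<tau>: "e = rep \<circ> \<tau>"
    using range_subset_imp_comp by (metis TM_simps(1))
  have "rename_fm \<tau> \<sigma>0 \<in> p"
  proof (rule p_closed[of "{}"])
    fix N :: "(nat,'f,'r) struc" and e' :: "bool \<times> nat \<Rightarrow> nat"
    assume "is_model arF N T" "range e' \<subseteq> carr N"
    moreover have "range (e' \<circ> \<tau>) \<subseteq> carr N"
      using \<open>range e' \<subseteq> carr N\<close> by auto
    ultimately show "sat N e' (rename_fm \<tau> \<sigma>0)"
      using \<sigma>0 unfolding is_model_def by (simp add: sat_rename_fm)
  qed (use \<sigma>0 wf_T in \<open>auto simp: wf_rename_fm\<close>)
  then show "sat TM e \<sigma>0"
    using sat_TM \<sigma>0 wf_T \<tau> by blast
qed

lemma in_G0: "p \<in> G0 arF arR T"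
proof -
  define a where "a i = rep (False, i)" for i
  define b where "b j = rep (True, j)" for j
  have "range a = range rep"
    using rep_False unfolding a_def by (auto intro: range_eqI[of _ _ "rep _"])
  moreover have "range b = range rep"
  proof
    show "range b \<subseteq> range rep"
      unfolding b_def by auto
    show "range rep \<subseteq> range b"
    proof
      fix n assume n: "n \<in> range rep"
      obtain j where "eqv (False, n) (True, j)"
        using x_eq_y by blast
      then have "n = b j"
        using n rep_False rep_eq_iff unfolding b_def by metis
      then show "n \<in> range b"
        by blast
    qed
  qed
  moreover have "tp2 arF arR TM a b = p"
  proof -
    have "pr a b = rep \<circ> id"
      by (simp add: fun_eq_iff pr_def a_def b_def split: prod.split)
    then have "tp2 arF arR TM a b = {\<phi>. wf_fm arF arR \<phi> \<and> rename_fm id \<phi> \<in> p}"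
      unfolding tp2_def tp_def using sat_TM[of _ id] by auto
    also have "\<dots> = {\<phi>. wf_fm arF arR \<phi> \<and> \<phi> \<in> p}"
      by (intro Collect_cong conj_cong refl complete_types_equiv[OF complete, of "{}"])
        (simp_all add: wf_rename_fm sat_rename_fm)
    also have "\<dots> = p"
      using complete_types_wf[OF complete] by blast
    finally show ?thesis .
  qed
  ultimately show ?thesis
    using is_model_TM G0I unfolding enum_def by (metis TM_simps(1))
qed

end

lemma G0_eq_Henkin_pair_types:
  "\<forall>\<sigma>\<in>T. wf_fm arF arR \<sigma> \<Longrightarrow> G0 arF arR T = Henkin_pair_types arF arR T"
  using G0_subset_Henkin_pair_types term_model.in_G0 term_model.intro by blast

section \<open>\<open>G0\<close> is Polish\<close>

instance trm :: (countable, countable) countable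
  by countable_datatype

instance fm :: (countable, countable, countable) countable
  by countable_datatype

lemma countable_UNIV_fm:
  assumes "countable (UNIV :: 'f set)" "countable (UNIV :: 'r set)" "countable (UNIV :: 'v set)"
  shows "countable (UNIV :: ('f,'r,'v) fm set)"
proof -
  obtain gf :: "'f \<Rightarrow> nat" and gr :: "'r \<Rightarrow> nat" and gv :: "'v \<Rightarrow> nat"
    where "inj gf" "inj gr" "inj gv"
    using assms unfolding countable_def by blast
  then have "inj (map_fm gf gr gv)"
    by (intro fm.inj_map)
  moreover have "countable (range (map_fm gf gr gv))"
    by simp
  ultimately show ?thesis
    by (blast intro: countable_image_inj_on)
qed

context
  fixes arF :: "'f \<Rightarrow> nat" and arR :: "'r \<Rightarrow> nat" and T :: "('f,'r,nat) fm set"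
  assumes countable_f: "countable (UNIV :: 'f set)" and countable_r: "countable (UNIV :: 'r set)"
begin

lemma countable_UNIV_pair_fm: "countable (UNIV :: ('f,'r,bool \<times> nat) fm set)"
  by (rule countable_UNIV_fm[OF countable_f countable_r]) simp

lemma second_countable_G0_topology: "second_countable (G0_topology arF arR T)"
  unfolding second_countable_def
proof (intro exI[of _ "range (G0_basic arF arR T)"] conjI ballI allI impI)
  show "countable (range (G0_basic arF arR T))"
    using countable_UNIV_pair_fm by simp
  show "openin (G0_topology arF arR T) V" if "V \<in> range (G0_basic arF arR T)" for V
    using that openin_G0_basic by blast
  fix U g assume "openin (G0_topology arF arR T) U \<and> g \<in> U"
  then have U: "openin (G0_topology arF arR T) U" and "g \<in> U"
    by blast+
  then have "g \<in> G0 arF arR T"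
    using openin_subset[OF U] topspace_G0_topology by blast
  moreover obtain \<phi> where "\<phi> \<in> g" "G0_basic arF arR T \<phi> \<subseteq> U"
    using G0_topology_basis[OF U \<open>g \<in> U\<close>] by blast
  ultimately show "\<exists>V\<in>range (G0_basic arF arR T). g \<in> V \<and> V \<subseteq> U"
    unfolding G0_basic_def by blast
qed

abbreviation fm_space :: "(('f,'r,bool \<times> nat) fm \<Rightarrow> real) topology" where
  "fm_space \<equiv> powertop_real UNIV"

lemma completely_metrizable_fm_space: "completely_metrizable_space fm_space"
  using countable_UNIV_pair_fm
  by (simp add: completely_metrizable_space_product_topology completely_metrizable_space_euclidean)

lemma openin_fm_space_coord:
  assumes "open S"
  shows "openin fm_space {f. f \<phi> \<in> S}"
proof -
  have "openin fm_space {f \<in> topspace fm_space. f \<phi> \<in> S}"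
    by (rule openin_continuous_map_preimage[OF continuous_map_product_projection])
      (simp_all only: UNIV_I open_openin[symmetric] assms)
  then show ?thesis
    by simp
qed

lemma closedin_fm_space_coord:
  assumes "closed S"
  shows "closedin fm_space {f. f \<phi> \<in> S}"
proof -
  have "closedin fm_space {f \<in> topspace fm_space. f \<phi> \<in> S}"
    by (rule closedin_continuous_map_preimage[OF continuous_map_product_projection])
      (simp_all only: UNIV_I closed_closedin[symmetric] assms)
  then show ?thesis
    by simp
qed

lemma openin_fm_space_UN_coord:
  "(\<And>i. i \<in> I \<Longrightarrow> open (S i)) \<Longrightarrow> openin fm_space (\<Union>i\<in>I. {f. f (\<phi> i) \<in> S i})"
  by (intro openin_Union) (auto intro: openin_fm_space_coord)

lemma openin_G0_not_basic: "openin (G0_topology arF arR T) {q \<in> G0 arF arR T. \<phi> \<notin> q}"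
proof (cases "wf_fm arF arR \<phi>")
  case True
  then have "{q \<in> G0 arF arR T. \<phi> \<notin> q} = G0_basic arF arR T (FNeg \<phi>)"
    unfolding G0_basic_def using G0_subset_complete_types complete_types_FNeg by blast
  then show ?thesis
    by (simp add: openin_G0_basic)
next
  case False
  then have "{q \<in> G0 arF arR T. \<phi> \<notin> q} = topspace (G0_topology arF arR T)"
    using topspace_G0_topology G0_subset_complete_types complete_types_wf by blast
  then show ?thesis
    by simp
qed

lemma continuous_map_indicator: "continuous_map (G0_topology arF arR T) fm_space indicator"
  unfolding continuous_map_componentwise_UNIV
proof
  fix \<phi> :: "('f,'r,bool \<times> nat) fm"
  show "continuous_map (G0_topology arF arR T) euclideanreal (\<lambda>p. indicator p \<phi>)"
    unfolding continuous_map
  proof (intro conjI allI impI)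
    fix V :: "real set"
    have "{p \<in> topspace (G0_topology arF arR T). indicator p \<phi> \<in> V} =
        (if 1 \<in> V then G0_basic arF arR T \<phi> else {}) \<union> (if 0 \<in> V then {q \<in> G0 arF arR T. \<phi> \<notin> q} else {})"
      unfolding topspace_G0_topology G0_basic_def by (auto simp: indicator_def)
    then show "openin (G0_topology arF arR T) {p \<in> topspace (G0_topology arF arR T). indicator p \<phi> \<in> V}"
      by (simp add: openin_G0_basic openin_G0_not_basic openin_Un)
  qed simp
qed

lemma open_map_indicator:
  "open_map (G0_topology arF arR T) (subtopology fm_space (indicator ` G0 arF arR T)) indicator"
  unfolding open_map_def
proof (intro allI impI)
  fix U assume U: "openin (G0_topology arF arR T) U"
  show "openin (subtopology fm_space (indicator ` G0 arF arR T)) (indicator ` U)"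
  proof (subst openin_subopen, intro ballI)
    fix y :: "('f,'r,bool \<times> nat) fm \<Rightarrow> real" assume "y \<in> indicator ` U"
    then obtain g where g: "g \<in> U" "y = indicator g"
      by blast
    obtain \<phi> where \<phi>: "\<phi> \<in> g" "G0_basic arF arR T \<phi> \<subseteq> U"
      using G0_topology_basis[OF U g(1)] by blast
    have "g \<in> G0 arF arR T"
      using openin_subset[OF U] g(1) topspace_G0_topology by blast
    let ?V = "{f :: ('f,'r,bool \<times> nat) fm \<Rightarrow> real. f \<phi> \<in> {1/2<..}} \<inter> indicator ` G0 arF arR T"
    have "openin (subtopology fm_space (indicator ` G0 arF arR T)) ?V"
      by (intro openin_subtopology_Int openin_fm_space_coord open_greaterThan)
    moreover have "y \<in> ?V"
      using g \<phi> \<open>g \<in> G0 arF arR T\<close> by simp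
    moreover have "?V \<subseteq> indicator ` U"
    proof
      fix f :: "('f,'r,bool \<times> nat) fm \<Rightarrow> real" assume "f \<in> ?V"
      then obtain q where "q \<in> G0 arF arR T" "f = indicator q" "indicator q \<phi> > (1/2 :: real)"
        by auto
      moreover from this have "\<phi> \<in> q"
        by (cases "\<phi> \<in> q") simp_all
      ultimately show "f \<in> indicator ` U"
        using \<phi>(2) unfolding G0_basic_def by blast
    qed
    ultimately show "\<exists>V. openin (subtopology fm_space (indicator ` G0 arF arR T)) V \<and> y \<in> V \<and>
        V \<subseteq> indicator ` U"
      by blast
  qed
qed

lemma homeomorphic_map_indicator:
  "homeomorphic_map (G0_topology arF arR T) (subtopology fm_space (indicator ` G0 arF arR T)) indicator"
proof (rule bijective_open_imp_homeomorphic_map)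
  show "continuous_map (G0_topology arF arR T) (subtopology fm_space (indicator ` G0 arF arR T)) indicator"
    using continuous_map_indicator unfolding continuous_map_in_subtopology
    by (simp add: topspace_G0_topology)
  show "indicator ` topspace (G0_topology arF arR T) =
      topspace (subtopology fm_space (indicator ` G0 arF arR T))"
    by (simp add: topspace_G0_topology)
  show "inj_on indicator (topspace (G0_topology arF arR T))"
    by (metis indicator_eq_1_iff inj_onI set_eqI)
qed (rule open_map_indicator)

definition Henkin_conditions :: "(('f,'r,bool \<times> nat) fm \<Rightarrow> real) set set" where
  "Henkin_conditions =
     range (\<lambda>\<phi>. {f. f \<phi> \<in> {0, 1}})
   \<union> (\<lambda>\<phi>. {f. f \<phi> \<in> {0}}) ` {\<phi>. \<not> wf_fm arF arR \<phi>}
   \<union> (\<lambda>\<phi>. {f. f \<phi> \<in> {1}} \<union> {f. f (FNeg \<phi>) \<in> {1}}) ` {\<phi>. wf_fm arF arR \<phi>}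
   \<union> (\<lambda>F. \<Union>\<phi>\<in>F. {f. f \<phi> \<in> {..<1/2}}) ` {F. finite F \<and>
       \<not> (\<exists>(M :: (nat,'f,'r) struc) e. is_model arF M T \<and> range e \<subseteq> carr M \<and> (\<forall>\<phi>\<in>F. sat M e \<phi>))}
   \<union> range (\<lambda>i. \<Union>j. {f. f (FEq (Var (False, i)) (Var (True, j))) \<in> {1/2<..}})
   \<union> range (\<lambda>j. \<Union>i. {f. f (FEq (Var (False, i)) (Var (True, j))) \<in> {1/2<..}})
   \<union> (\<Union>v. (\<lambda>\<phi>. {f. f (FEx v \<phi>) \<in> {..<1/2}}
       \<union> (\<Union>w\<in>- {v}. {f. f (FEx v (FConj (FEq (Var v) (Var w)) \<phi>)) \<in> {1/2<..}}))
     ` {\<phi>. wf_fm arF arR \<phi>})"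

lemma Henkin_conditions_cases:
  assumes "S \<in> Henkin_conditions"
  obtains (indicator) \<phi> where "S = {f. f \<phi> \<in> {0, 1}}"
  | (wf) \<phi> where "\<not> wf_fm arF arR \<phi>" "S = {f. f \<phi> \<in> {0}}"
  | (max) \<phi> where "wf_fm arF arR \<phi>" "S = {f. f \<phi> \<in> {1}} \<union> {f. f (FNeg \<phi>) \<in> {1}}"
  | (finsat) F where "finite F"
      "\<not> (\<exists>(M :: (nat,'f,'r) struc) e. is_model arF M T \<and> range e \<subseteq> carr M \<and> (\<forall>\<phi>\<in>F. sat M e \<phi>))"
      "S = (\<Union>\<phi>\<in>F. {f. f \<phi> \<in> {..<1/2}})"
  | (x_eq_y) i where "S = (\<Union>j. {f. f (FEq (Var (False, i)) (Var (True, j))) \<in> {1/2<..}})"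
  | (y_eq_x) j where "S = (\<Union>i. {f. f (FEq (Var (False, i)) (Var (True, j))) \<in> {1/2<..}})"
  | (witness) v \<phi> where "wf_fm arF arR \<phi>" "S = {f. f (FEx v \<phi>) \<in> {..<1/2}}
       \<union> (\<Union>w\<in>- {v}. {f. f (FEx v (FConj (FEq (Var v) (Var w)) \<phi>)) \<in> {1/2<..}})"
  using assms unfolding Henkin_conditions_def
  by (elim UnE imageE UN_E CollectE conjE) (rule that; assumption)+

lemma Henkin_conditionsI:
  "{f. f \<phi> \<in> {0, 1}} \<in> Henkin_conditions"
  "\<not> wf_fm arF arR \<phi> \<Longrightarrow> {f. f \<phi> \<in> {0}} \<in> Henkin_conditions"
  "wf_fm arF arR \<phi> \<Longrightarrow> {f. f \<phi> \<in> {1}} \<union> {f. f (FNeg \<phi>) \<in> {1}} \<in> Henkin_conditions"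
  "finite F \<Longrightarrow>
    \<not> (\<exists>(M :: (nat,'f,'r) struc) e. is_model arF M T \<and> range e \<subseteq> carr M \<and> (\<forall>\<phi>\<in>F. sat M e \<phi>)) \<Longrightarrow>
    (\<Union>\<phi>\<in>F. {f. f \<phi> \<in> {..<1/2}}) \<in> Henkin_conditions"
  "(\<Union>j. {f. f (FEq (Var (False, i)) (Var (True, j))) \<in> {1/2<..}}) \<in> Henkin_conditions"
  "(\<Union>i. {f. f (FEq (Var (False, i)) (Var (True, j))) \<in> {1/2<..}}) \<in> Henkin_conditions"
  "wf_fm arF arR \<phi> \<Longrightarrow> {f. f (FEx v \<phi>) \<in> {..<1/2}}
       \<union> (\<Union>w\<in>- {v}. {f. f (FEx v (FConj (FEq (Var v) (Var w)) \<phi>)) \<in> {1/2<..}}) \<in> Henkin_conditions"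
  unfolding Henkin_conditions_def
  subgoal
    by (intro UnI1 rangeI)
  subgoal
    by (rule UnI1, rule UnI1, rule UnI1, rule UnI1, rule UnI1, rule UnI2, rule imageI) simp
  subgoal
    by (rule UnI1, rule UnI1, rule UnI1, rule UnI1, rule UnI2, rule imageI) simp
  subgoal
    by (rule UnI1, rule UnI1, rule UnI1, rule UnI2, rule imageI) simp
  subgoal
    by (rule UnI1, rule UnI1, rule UnI2, rule rangeI)
  subgoal
    by (rule UnI1, rule UnI2, rule rangeI)
  subgoal
    by (rule UnI2, rule UN_I[of v], rule UNIV_I, rule imageI) simp
  done

lemma gdelta_in_Inter_Henkin_conditions: "gdelta_in fm_space (\<Inter> Henkin_conditions)"
proof (rule gdelta_in_Inter)
  have "countable {F :: ('f,'r,bool \<times> nat) fm set. finite F}"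
    using countable_Collect_finite_subset[OF countable_UNIV_pair_fm] by simp
  then show "countable Henkin_conditions"
    unfolding Henkin_conditions_def using countable_UNIV_pair_fm
    by (intro countable_Un countable_UN countable_image) (auto intro: countable_subset)
  show "Henkin_conditions \<noteq> {}"
    unfolding Henkin_conditions_def by blast
  have metrizable: "metrizable_space fm_space"
    by (rule completely_metrizable_imp_metrizable_space[OF completely_metrizable_fm_space])
  fix S assume "S \<in> Henkin_conditions"
  then show "gdelta_in fm_space S"
  proof (cases rule: Henkin_conditions_cases)
    case (indicator \<phi>)
    show ?thesis
      unfolding indicator by (intro closed_imp_gdelta_in[OF metrizable] closedin_fm_space_coord) simp
  next
    case (wf \<phi>)
    show ?thesis
      unfolding wf(2) by (intro closed_imp_gdelta_in[OF metrizable] closedin_fm_space_coord) simp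
  next
    case (max \<phi>)
    show ?thesis
      unfolding max(2)
      by (intro closed_imp_gdelta_in[OF metrizable] closedin_Un closedin_fm_space_coord) simp_all
  next
    case (finsat F)
    show ?thesis
      unfolding finsat(3) by (intro open_imp_gdelta_in openin_fm_space_UN_coord) simp
  next
    case (x_eq_y i)
    show ?thesis
      unfolding x_eq_y by (intro open_imp_gdelta_in openin_fm_space_UN_coord) simp
  next
    case (y_eq_x j)
    show ?thesis
      unfolding y_eq_x by (intro open_imp_gdelta_in openin_fm_space_UN_coord) simp
  next
    case (witness v \<phi>)
    show ?thesis
      unfolding witness(2)
      by (intro open_imp_gdelta_in openin_Un openin_fm_space_coord openin_fm_space_UN_coord) simp_all
  qed
qed

lemma indicator_in_Henkin_conditions:
  assumes p: "p \<in> Henkin_pair_types arF arR T" and "S \<in> Henkin_conditions"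
  shows "indicator p \<in> S"
proof -
  have ct: "p \<in> complete_types arF arR T"
    using p by (simp add: Henkin_pair_types_def)
  from assms(2) show ?thesis
  proof (cases rule: Henkin_conditions_cases)
    case (wf \<phi>)
    then show ?thesis
      using complete_types_wf[OF ct] by (auto simp: indicator_def)
  next
    case (max \<phi>)
    then show ?thesis
      using complete_types_max[OF ct] by (auto simp: indicator_def)
  next
    case (finsat F)
    then have "\<not> F \<subseteq> p"
      using complete_types_finitely_sat[OF ct] by blast
    then show ?thesis
      using finsat by (auto simp: indicator_def)
  next
    case (x_eq_y i)
    then show ?thesis
      using p unfolding Henkin_pair_types_def by (auto simp: indicator_def)
  next
    case (y_eq_x j)
    then show ?thesis
      using p unfolding Henkin_pair_types_def by (auto simp: indicator_def)
  next
    case (witness v \<phi>)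
    show ?thesis
    proof (cases "FEx v \<phi> \<in> p")
      case True
      then obtain w where "w \<noteq> v" "FEx v (FConj (FEq (Var v) (Var w)) \<phi>) \<in> p"
        using p witness(1) unfolding Henkin_pair_types_def by blast
      then show ?thesis
        using witness(2) by (auto simp: indicator_def)
    next
      case False
      then show ?thesis
        using witness(2) by (auto simp: indicator_def)
    qed
  qed (auto simp: indicator_def)
qed

lemma Inter_Henkin_conditions_imp_indicator:
  assumes f: "f \<in> \<Inter> Henkin_conditions"
  shows "f \<in> indicator ` Henkin_pair_types arF arR T"
proof -
  have cond: "f \<in> S" if "S \<in> Henkin_conditions" for S
    using f that by blast
  have f01: "f \<phi> = 0 \<or> f \<phi> = 1" for \<phi>
    using cond[OF Henkin_conditionsI(1)] by simp
  then have f_eq: "f = indicator {\<phi>. f \<phi> = 1}"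
    by (auto simp: fun_eq_iff indicator_def)
  have half: "f \<phi> > 1/2 \<longleftrightarrow> f \<phi> = 1" for \<phi>
    using f01[of \<phi>] by auto
  define p where "p = {\<phi>. f \<phi> = 1}"
  have "\<phi> \<in> p \<Longrightarrow> wf_fm arF arR \<phi>" for \<phi>
    using cond[OF Henkin_conditionsI(2)] unfolding p_def by force
  moreover have "wf_fm arF arR \<phi> \<Longrightarrow> \<phi> \<in> p \<or> FNeg \<phi> \<in> p" for \<phi>
    using cond[OF Henkin_conditionsI(3)] unfolding p_def by simp
  moreover have "\<exists>(M :: (nat,'f,'r) struc) e. is_model arF M T \<and> range e \<subseteq> carr M \<and> (\<forall>\<phi>\<in>F. sat M e \<phi>)"
    if "finite F" "F \<subseteq> p" for F
  proof (rule ccontr)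
    assume "\<not> ?thesis"
    then have "f \<in> (\<Union>\<phi>\<in>F. {f. f \<phi> \<in> {..<1/2}})"
      using cond[OF Henkin_conditionsI(4)] that(1) by blast
    then show False
      using that(2) unfolding p_def by auto
  qed
  ultimately have "p \<in> complete_types arF arR T"
    unfolding complete_types_def by blast
  moreover have "\<exists>j. FEq (Var (False, i)) (Var (True, j)) \<in> p" for i
    using cond[OF Henkin_conditionsI(5)] half unfolding p_def by auto
  moreover have "\<exists>i. FEq (Var (False, i)) (Var (True, j)) \<in> p" for j
    using cond[OF Henkin_conditionsI(6)] half unfolding p_def by auto
  moreover have "\<exists>w. w \<noteq> v \<and> FEx v (FConj (FEq (Var v) (Var w)) \<phi>) \<in> p"
    if "wf_fm arF arR \<phi>" "FEx v \<phi> \<in> p" for v \<phi>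
  proof -
    have "f \<in> {f. f (FEx v \<phi>) \<in> {..<1/2}}
       \<union> (\<Union>w\<in>- {v}. {f. f (FEx v (FConj (FEq (Var v) (Var w)) \<phi>)) \<in> {1/2<..}})"
      using cond[OF Henkin_conditionsI(7)] that(1) by blast
    then show ?thesis
      using that(2) half unfolding p_def by auto
  qed
  ultimately have "p \<in> Henkin_pair_types arF arR T"
    unfolding Henkin_pair_types_def by blast
  then show ?thesis
    using f_eq unfolding p_def by blast
qed

lemma indicator_image_Henkin_pair_types:
  "indicator ` Henkin_pair_types arF arR T = \<Inter> Henkin_conditions"
  using indicator_in_Henkin_conditions Inter_Henkin_conditions_imp_indicator by blast

lemma Polish_space_G0_topology:
  assumes "\<forall>\<sigma>\<in>T. wf_fm arF arR \<sigma>"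
  shows "Polish_space (G0_topology arF arR T)"
proof -
  have "completely_metrizable_space (subtopology fm_space (indicator ` G0 arF arR T))"
    using completely_metrizable_space_gdelta_in
      [OF completely_metrizable_fm_space gdelta_in_Inter_Henkin_conditions]
    by (simp add: G0_eq_Henkin_pair_types[OF assms] indicator_image_Henkin_pair_types)
  moreover have "G0_topology arF arR T homeomorphic_space subtopology fm_space (indicator ` G0 arF arR T)"
    using homeomorphic_map_indicator homeomorphic_map_imp_homeomorphic_space by blast
  ultimately show ?thesis
    unfolding Polish_space_def
    using second_countable_imp_separable_space second_countable_G0_topology
      homeomorphic_completely_metrizable_space by blast
qed

end

theorem lemma2p2:
  fixes arF :: "'f \<Rightarrow> nat" and arR :: "'r \<Rightarrow> nat" and T :: "('f,'r,nat) fm set"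
  assumes "countable (UNIV :: 'f set)" and "countable (UNIV :: 'r set)"
    and "complete_theory arF arR T"
  shows "Polish_space (G0_topology arF arR T)
    \<and> open_topological_groupoid (G0_topology arF arR T) (B0 arF arR T)
        (G0_composable arF arR T) (G0_mul arF arR T) (G0_inv arF arR T)
    \<and> (\<forall>(M :: (nat,'f,'r) struc) a b. is_model arF M T \<and> enum M a \<and> enum M b \<longrightarrow>
         G0_mul arF arR T (tp2 arF arR M a b) (G0_inv arF arR T (tp2 arF arR M a b)) = tp2 arF arR M a a
       \<and> G0_mul arF arR T (G0_inv arF arR T (tp2 arF arR M a b)) (tp2 arF arR M a b) = tp2 arF arR M b b)"
proof -
  have "\<forall>\<sigma>\<in>T. wf_fm arF arR \<sigma>"
    using assms(3) by (simp add: complete_theory_def sentence_def)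
  then show ?thesis
    by (intro conjI Polish_space_G0_topology[OF assms(1,2)] open_topological_groupoid_G0)
      (simp_all add: G0_target_tp2 G0_source_tp2)
qed

end
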